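(* Let $\tau$ be an LOSR-free transformation which takes bipartite resources of one type to bipartite resources of another type, in one of the following three cases: (1) from type $\mathsf{CC}\to\mathsf{CC}$ (boxes) to type $\mathsf{II}\to\mathsf{QQ}$ (states); (2) from type $\mathsf{CC}\to\mathsf{CC}$ (boxes) to type $\mathsf{CI}\to\mathsf{CQ}$ (steering assemblages); (3) from type $\mathsf{CI}\to\mathsf{CQ}$ (steering assemblages) to type $\mathsf{II}\to\mathsf{QQ}$ (states). Then for every resource $R$ of the initial type (of any dimensions), the resource $\tau[R]$ is LOSR-free.
   Context: A system has a dimension and a type in $\{\mathsf{I},\mathsf{C},\mathsf{Q}\}$ (trivial, i.e. dimension 1; classical; quantum). A bipartite resource with Alice's input/output $\mathcal{X},\mathcal{A}$ and Bob's input/output $\mathcal{Y},\mathcal{B}$ is a completely positive linear map $R$ from operators on $\mathcal{X}\otimes\mathcal{Y}$ to operators on $\mathcal{A}\otimes\mathcal{B}$ with $\mathrm{tr}R[\xi\otimes\psi]=1$ for all density matrices $\xi,\psi$, nonsignaling in both directions ($\mathrm{tr}_{\mathcal{A}}R[\xi\otimes\psi]$ independent of $\xi$, $\mathrm{tr}_{\mathcal{B}}R[\xi\otimes\psi]$ independent of $\psi$), and satisfying classicality constraints: for a classical output $\mathcal{A}$, $\langle i|R[\xi\otimes\psi]|j\rangle_{\mathcal{A}}=0$ for $i\neq j$; for a classical input $\mathcal{X}$, $R[|i\rangle\langle j|\otimes\psi]=0$ for $i\ne j$ (analogously for Bob). Its type is $\mathsf{T}[\mathcal{X}]\mathsf{T}[\mathcal{Y}]\to\mathsf{T}[\mathcal{A}]\mathsf{T}[\mathcal{B}]$.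 A resource is LOSR-free if it equals $\sum_i p_i R^i_{\mathcal{A}|\mathcal{X}}\otimes R^i_{\mathcal{B}|\mathcal{Y}}$ for a probability distribution $(p_i)$ and single-party channels (CPTP maps respecting the classicality of their input/output). An LOSR-free transformation from resources with systems $\mathcal{X}\mathcal{Y}\to\mathcal{A}\mathcal{B}$ to resources with systems $\mathcal{X}'\mathcal{Y}'\to\mathcal{A}'\mathcal{B}'$ is a map of the form $\tau[R]=\sum_\lambda p_\lambda\,(\mathcal{E}^\lambda_{\mathcal{A}}\otimes\mathcal{E}^\lambda_{\mathcal{B}})\circ(R\otimes\mathrm{id}_{\mathcal{M}_A\mathcal{M}_B})\circ(\mathcal{P}^\lambda_{\mathcal{A}}\otimes\mathcal{P}^\lambda_{\mathcal{B}})$, i.e. a convex mixture of products of local supermaps, where $\mathcal{P}^\lambda_{\mathcal{A}}$ is a channel from $\mathcal{X}'$ to $\mathcal{X}\otimes\mathcal{M}_A$, $\mathcal{E}^\lambda_{\mathcal{A}}$ is a channel from $\mathcal{A}\otimes\mathcal{M}_A$ to $\mathcal{A}'$ (with local memory $\mathcal{M}_A$), similarly for Bob, such that $\tau$ maps resources of the initial type to resources of the target type. *)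

theory Defs
  imports Complex_Main
begin

text \<open>System types: trivial, classical, quantum.\<close>
datatype systype = TI | TC | TQ

definition valid_sys :: "nat \<Rightarrow> systype \<Rightarrow> bool" where
  "valid_sys d t \<longleftrightarrow> d \<ge> 1 \<and> (t = TI \<longrightarrow> d = 1)"

text \<open>Operators on the space spanned by the basis indexed by a finite set S are
  represented by their matrix entries (only entries indexed by S matter).
  A linear map from operators on S to operators on T is represented by its
  coefficients K i i' j j' = entry (j,j') of the image of |i><i'|.\<close>
type_synonym 'i op = "'i \<Rightarrow> 'i \<Rightarrow> complex"
type_synonym ('i,'j) kern = "'i \<Rightarrow> 'i \<Rightarrow> 'j \<Rightarrow> 'j \<Rightarrow> complex"

definition kapply :: "('i,'j) kern \<Rightarrow> 'i set \<Rightarrow> 'i op \<Rightarrow> 'j op" where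
  "kapply K S \<rho> = (\<lambda>j j'. \<Sum>i\<in>S. \<Sum>i'\<in>S. K i i' j j' * \<rho> i i')"

definition ktensor :: "('i,'j) kern \<Rightarrow> ('k,'l) kern \<Rightarrow> ('i \<times> 'k, 'j \<times> 'l) kern" where
  "ktensor K L = (\<lambda>(x,y) (x',y') (a,b) (a',b'). K x x' a a' * L y y' b b')"

definition kid :: "('i,'i) kern" where
  "kid = (\<lambda>i i' j j'. if i = j \<and> i' = j' then 1 else 0)"

definition kcomp :: "('i,'j) kern \<Rightarrow> 'j set \<Rightarrow> ('j,'k) kern \<Rightarrow> ('i,'k) kern" where
  "kcomp K1 S2 K2 = (\<lambda>i i' k k'. \<Sum>j\<in>S2. \<Sum>j'\<in>S2. K1 i i' j j' * K2 j j' k k')"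

definition kperm :: "('i \<Rightarrow> 'j) \<Rightarrow> ('i,'j) kern" where
  "kperm \<sigma> = (\<lambda>i i' j j'. if j = \<sigma> i \<and> j' = \<sigma> i' then 1 else 0)"

definition optensor :: "'i op \<Rightarrow> 'k op \<Rightarrow> ('i \<times> 'k) op" where
  "optensor \<xi> \<psi> = (\<lambda>(x,y) (x',y'). \<xi> x x' * \<psi> y y')"

definition ketbra :: "'i \<Rightarrow> 'i \<Rightarrow> 'i op" where
  "ketbra i j = (\<lambda>u v. if u = i \<and> v = j then 1 else 0)"

definition trace :: "'i set \<Rightarrow> 'i op \<Rightarrow> complex" where
  "trace S \<rho> = (\<Sum>i\<in>S. \<rho> i i)"

definition nonneg :: "complex \<Rightarrow> bool" where
  "nonneg z \<longleftrightarrow> Im z = 0 \<and> Re z \<ge> 0"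

definition psd :: "'i set \<Rightarrow> 'i op \<Rightarrow> bool" where
  "psd S \<rho> \<longleftrightarrow> (\<forall>v. nonneg (\<Sum>i\<in>S. \<Sum>i'\<in>S. cnj (v i) * \<rho> i i' * v i'))"

definition density :: "'i set \<Rightarrow> 'i op \<Rightarrow> bool" where
  "density S \<rho> \<longleftrightarrow> psd S \<rho> \<and> trace S \<rho> = 1"

definition op_eq_on :: "'i set \<Rightarrow> 'i op \<Rightarrow> 'i op \<Rightarrow> bool" where
  "op_eq_on S \<rho> \<sigma> \<longleftrightarrow> (\<forall>i\<in>S. \<forall>i'\<in>S. \<rho> i i' = \<sigma> i i')"

definition keq :: "'i set \<Rightarrow> 'j set \<Rightarrow> ('i,'j) kern \<Rightarrow> ('i,'j) kern \<Rightarrow> bool" where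
  "keq S T K L \<longleftrightarrow> (\<forall>i\<in>S. \<forall>i'\<in>S. \<forall>j\<in>T. \<forall>j'\<in>T. K i i' j j' = L i i' j j')"

definition is_CP :: "'i set \<Rightarrow> 'j set \<Rightarrow> ('i,'j) kern \<Rightarrow> bool" where
  "is_CP S T K \<longleftrightarrow> (\<forall>k::nat. \<forall>\<rho>. psd (S \<times> {..<k}) \<rho> \<longrightarrow>
      psd (T \<times> {..<k}) (kapply (ktensor K kid) (S \<times> {..<k}) \<rho>))"

definition is_CPTP :: "'i set \<Rightarrow> 'j set \<Rightarrow> ('i,'j) kern \<Rightarrow> bool" where
  "is_CPTP S T K \<longleftrightarrow> is_CP S T K \<and> (\<forall>\<rho>. trace T (kapply K S \<rho>) = trace S \<rho>)"

text \<open>Single-party channel respecting the classicality of input and output.\<close>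
definition channel :: "nat \<Rightarrow> systype \<Rightarrow> nat \<Rightarrow> systype \<Rightarrow> (nat,nat) kern \<Rightarrow> bool" where
  "channel dX tX dA tA K \<longleftrightarrow>
     valid_sys dX tX \<and> valid_sys dA tA \<and> is_CPTP {..<dX} {..<dA} K \<and>
     (tA = TC \<longrightarrow> (\<forall>\<rho>. density {..<dX} \<rho> \<longrightarrow>
        (\<forall>a\<in>{..<dA}. \<forall>a'\<in>{..<dA}. a \<noteq> a' \<longrightarrow> kapply K {..<dX} \<rho> a a' = 0))) \<and>
     (tX = TC \<longrightarrow> (\<forall>i\<in>{..<dX}. \<forall>j\<in>{..<dX}. i \<noteq> j \<longrightarrow>
        op_eq_on {..<dA} (kapply K {..<dX} (ketbra i j)) (\<lambda>_ _. 0)))"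

definition is_resource ::
  "nat \<Rightarrow> systype \<Rightarrow> nat \<Rightarrow> systype \<Rightarrow> nat \<Rightarrow> systype \<Rightarrow> nat \<Rightarrow> systype \<Rightarrow>
   (nat \<times> nat, nat \<times> nat) kern \<Rightarrow> bool" where
  "is_resource dX tX dY tY dA tA dB tB R \<longleftrightarrow>
     (let X = {..<dX}; Y = {..<dY}; A = {..<dA}; B = {..<dB};
          out = (\<lambda>\<rho>. kapply R (X \<times> Y) \<rho>) in
     valid_sys dX tX \<and> valid_sys dY tY \<and> valid_sys dA tA \<and> valid_sys dB tB \<and>
     is_CP (X \<times> Y) (A \<times> B) R \<and>
     (\<forall>\<xi> \<psi>. density X \<xi> \<longrightarrow> density Y \<psi> \<longrightarrow> trace (A \<times> B) (out (optensor \<xi> \<psi>)) = 1) \<and>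
     (\<forall>\<xi> \<xi>' \<psi>. density X \<xi> \<longrightarrow> density X \<xi>' \<longrightarrow> density Y \<psi> \<longrightarrow>
        op_eq_on B (\<lambda>b b'. \<Sum>a\<in>A. out (optensor \<xi> \<psi>) (a,b) (a,b'))
                    (\<lambda>b b'. \<Sum>a\<in>A. out (optensor \<xi>' \<psi>) (a,b) (a,b'))) \<and>
     (\<forall>\<xi> \<psi> \<psi>'. density X \<xi> \<longrightarrow> density Y \<psi> \<longrightarrow> density Y \<psi>' \<longrightarrow>
        op_eq_on A (\<lambda>a a'. \<Sum>b\<in>B. out (optensor \<xi> \<psi>) (a,b) (a',b))
                    (\<lambda>a a'. \<Sum>b\<in>B. out (optensor \<xi> \<psi>') (a,b) (a',b))) \<and>
     (tA = TC \<longrightarrow> (\<forall>\<xi> \<psi>. density X \<xi> \<longrightarrow> density Y \<psi> \<longrightarrow>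
        (\<forall>a\<in>A. \<forall>a'\<in>A. \<forall>b\<in>B. \<forall>b'\<in>B. a \<noteq> a' \<longrightarrow> out (optensor \<xi> \<psi>) (a,b) (a',b') = 0))) \<and>
     (tB = TC \<longrightarrow> (\<forall>\<xi> \<psi>. density X \<xi> \<longrightarrow> density Y \<psi> \<longrightarrow>
        (\<forall>a\<in>A. \<forall>a'\<in>A. \<forall>b\<in>B. \<forall>b'\<in>B. b \<noteq> b' \<longrightarrow> out (optensor \<xi> \<psi>) (a,b) (a',b') = 0))) \<and>
     (tX = TC \<longrightarrow> (\<forall>i\<in>X. \<forall>j\<in>X. \<forall>\<psi>. i \<noteq> j \<longrightarrow> density Y \<psi> \<longrightarrow>
        op_eq_on (A \<times> B) (out (optensor (ketbra i j) \<psi>)) (\<lambda>_ _. 0))) \<and>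
     (tY = TC \<longrightarrow> (\<forall>i\<in>Y. \<forall>j\<in>Y. \<forall>\<xi>. i \<noteq> j \<longrightarrow> density X \<xi> \<longrightarrow>
        op_eq_on (A \<times> B) (out (optensor \<xi> (ketbra i j))) (\<lambda>_ _. 0))))"

definition LOSR_free ::
  "nat \<Rightarrow> systype \<Rightarrow> nat \<Rightarrow> systype \<Rightarrow> nat \<Rightarrow> systype \<Rightarrow> nat \<Rightarrow> systype \<Rightarrow>
   (nat \<times> nat, nat \<times> nat) kern \<Rightarrow> bool" where
  "LOSR_free dX tX dY tY dA tA dB tB R \<longleftrightarrow>
     is_resource dX tX dY tY dA tA dB tB R \<and>
     (\<exists>(I::nat set) (p::nat \<Rightarrow> real) RA RB. finite I \<and> (\<forall>i\<in>I. p i \<ge> 0) \<and> (\<Sum>i\<in>I. p i) = 1 \<and>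
        (\<forall>i\<in>I. channel dX tX dA tA (RA i) \<and> channel dY tY dB tB (RB i)) \<and>
        keq ({..<dX} \<times> {..<dY}) ({..<dA} \<times> {..<dB}) R
            (\<lambda>u u' v v'. \<Sum>i\<in>I. complex_of_real (p i) * ktensor (RA i) (RB i) u u' v v'))"

text \<open>One branch (fixed \<lambda>) of an LOSR supermap:
  (E_A \<otimes> E_B) \<circ> (R \<otimes> id_{M_A M_B}) \<circ> (P_A \<otimes> P_B), with memories of dimensions mA, mB.\<close>
definition supermap_branch ::
  "nat \<Rightarrow> nat \<Rightarrow> nat \<Rightarrow> nat \<Rightarrow> nat \<Rightarrow> nat \<Rightarrow>
   (nat, nat \<times> nat) kern \<Rightarrow> (nat, nat \<times> nat) kern \<Rightarrow>
   (nat \<times> nat, nat) kern \<Rightarrow> (nat \<times> nat, nat) kern \<Rightarrow>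
   (nat \<times> nat, nat \<times> nat) kern \<Rightarrow> (nat \<times> nat, nat \<times> nat) kern" where
  "supermap_branch dX dY dA dB mA mB PA PB EA EB R =
     (let X = {..<dX}; Y = {..<dY}; A = {..<dA}; B = {..<dB}; MA = {..<mA}; MB = {..<mB} in
      kcomp
       (kcomp
         (kcomp
           (kcomp (ktensor PA PB) ((X \<times> MA) \<times> (Y \<times> MB))
                  (kperm (\<lambda>((x,m),(y,n)). ((x,y),(m,n)))))
           ((X \<times> Y) \<times> (MA \<times> MB)) (ktensor R kid))
         ((A \<times> B) \<times> (MA \<times> MB)) (kperm (\<lambda>((a,b),(m,n)). ((a,m),(b,n)))))
       ((A \<times> MA) \<times> (B \<times> MB)) (ktensor EA EB))"

definition supermap ::
  "nat \<Rightarrow> nat \<Rightarrow> nat \<Rightarrow> nat \<Rightarrow> nat set \<Rightarrow> (nat \<Rightarrow> real) \<Rightarrow> (nat \<Rightarrow> nat) \<Rightarrow> (nat \<Rightarrow> nat) \<Rightarrow>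
   (nat \<Rightarrow> (nat, nat \<times> nat) kern) \<Rightarrow> (nat \<Rightarrow> (nat, nat \<times> nat) kern) \<Rightarrow>
   (nat \<Rightarrow> (nat \<times> nat, nat) kern) \<Rightarrow> (nat \<Rightarrow> (nat \<times> nat, nat) kern) \<Rightarrow>
   (nat \<times> nat, nat \<times> nat) kern \<Rightarrow> (nat \<times> nat, nat \<times> nat) kern" where
  "supermap dX dY dA dB \<Lambda> p mA mB PA PB EA EB R =
     (\<lambda>u u' v v'. \<Sum>l\<in>\<Lambda>. complex_of_real (p l) *
        supermap_branch dX dY dA dB (mA l) (mB l) (PA l) (PB l) (EA l) (EB l) R u u' v v')"

definition LOSR_free_transformation ::
  "nat \<Rightarrow> systype \<Rightarrow> nat \<Rightarrow> systype \<Rightarrow> nat \<Rightarrow> systype \<Rightarrow> nat \<Rightarrow> systype \<Rightarrow>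
   nat \<Rightarrow> systype \<Rightarrow> nat \<Rightarrow> systype \<Rightarrow> nat \<Rightarrow> systype \<Rightarrow> nat \<Rightarrow> systype \<Rightarrow>
   nat set \<Rightarrow> (nat \<Rightarrow> real) \<Rightarrow> (nat \<Rightarrow> nat) \<Rightarrow> (nat \<Rightarrow> nat) \<Rightarrow>
   (nat \<Rightarrow> (nat, nat \<times> nat) kern) \<Rightarrow> (nat \<Rightarrow> (nat, nat \<times> nat) kern) \<Rightarrow>
   (nat \<Rightarrow> (nat \<times> nat, nat) kern) \<Rightarrow> (nat \<Rightarrow> (nat \<times> nat, nat) kern) \<Rightarrow> bool" where
  "LOSR_free_transformation dX tX dY tY dA tA dB tB dX' tX' dY' tY' dA' tA' dB' tB'
       \<Lambda> p mA mB PA PB EA EB \<longleftrightarrow>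
     finite \<Lambda> \<and> (\<forall>l\<in>\<Lambda>. p l \<ge> 0) \<and> (\<Sum>l\<in>\<Lambda>. p l) = 1 \<and>
     (\<forall>l\<in>\<Lambda>. mA l \<ge> 1 \<and> mB l \<ge> 1 \<and>
        is_CPTP {..<dX'} ({..<dX} \<times> {..<mA l}) (PA l) \<and>
        is_CPTP {..<dY'} ({..<dY} \<times> {..<mB l}) (PB l) \<and>
        is_CPTP ({..<dA} \<times> {..<mA l}) {..<dA'} (EA l) \<and>
        is_CPTP ({..<dB} \<times> {..<mB l}) {..<dB'} (EB l)) \<and>
     (\<forall>R. is_resource dX tX dY tY dA tA dB tB R \<longrightarrow>
        is_resource dX' tX' dY' tY' dA' tA' dB' tB'
          (supermap dX dY dA dB \<Lambda> p mA mB PA PB EA EB R))"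

end

theory Submission
  imports Defs "HOL-Library.Countable" "HOL-Library.Complex_Order"
begin

text \<open>
  In all three cases the inputs X, Y and the output A of the initial resource R are classical
  (Y possibly trivial), so R is block diagonal in x, y and a.  Each branch of the supermap then
  factorises as a sum over x, y, a of Alice's wiring fed with the classical pair (x, a), tensored
  with Bob's wiring fed with y and the conditional B-output of R; both factors are positive.

  For a target of type II \<rightarrow> QQ this already exhibits \<tau>[R] as a nonnegative combination of
  product states, and normalising the factors gives an LOSR decomposition.  For the target
  CI \<rightarrow> CQ the B-output of R is classical too, so Bob's factor splits further over his box
  outcome b and \<tau>[R] becomes a local-hidden-state assemblage: a nonnegative weight G(a'|x')
  times a positive operator on B'.  No-signalling of R makes the row sums of G independent of
  x', so G normalises to a classical channel for Alice, while the operators normalise to states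
  prepared by Bob.
\<close>

lemma sum_sum_delta:
  assumes "finite S" "finite T" "i \<in> S" "j \<in> T"
  shows "(\<Sum>s\<in>S. \<Sum>t\<in>T. if s = i \<and> t = j then f s t else 0) = f i j"
proof -
  have "(\<Sum>s\<in>S. \<Sum>t\<in>T. if s = i \<and> t = j then f s t else 0)
      = (\<Sum>s\<in>S. if s = i then (\<Sum>t\<in>T. if t = j then f s t else 0) else 0)"
    by (rule sum.cong[OF refl]) auto
  then show ?thesis using assms by (simp add: sum.delta)
qed

lemma sum_if_left: "(\<Sum>x\<in>A. if P then f x else 0) = (if P then sum f A else 0)"
  by simp

lemma sum_swap_pairs:
  "(\<Sum>a\<in>A. \<Sum>b\<in>B. \<Sum>c\<in>C. \<Sum>d\<in>D. f a b c d) = (\<Sum>c\<in>C. \<Sum>d\<in>D. \<Sum>a\<in>A. \<Sum>b\<in>B. f a b c d)"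
proof -
  have "(\<Sum>a\<in>A. \<Sum>b\<in>B. \<Sum>c\<in>C. \<Sum>d\<in>D. f a b c d) = (\<Sum>a\<in>A. \<Sum>c\<in>C. \<Sum>d\<in>D. \<Sum>b\<in>B. f a b c d)"
    by (intro sum.cong refl) (simp add: sum.swap[of _ B])
  also have "\<dots> = (\<Sum>c\<in>C. \<Sum>d\<in>D. \<Sum>a\<in>A. \<Sum>b\<in>B. f a b c d)"
    by (simp add: sum.swap[of _ A])
  finally show ?thesis .
qed

lemma sum_sum_insert_zero_cross:
  assumes "finite F" "t0 \<notin> F" "\<And>t. t \<in> insert t0 F \<Longrightarrow> f t0 t = 0 \<and> f t t0 = 0"
  shows "(\<Sum>t\<in>insert t0 F. \<Sum>t'\<in>insert t0 F. f t t') = (\<Sum>t\<in>F. \<Sum>t'\<in>F. f t t')"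
proof -
  have "(\<Sum>t\<in>insert t0 F. \<Sum>t'\<in>insert t0 F. f t t') = (\<Sum>t\<in>insert t0 F. \<Sum>t'\<in>F. f t t')"
    using assms by (intro sum.cong[OF refl]) simp
  also have "\<dots> = (\<Sum>t\<in>F. \<Sum>t'\<in>F. f t t')"
    using assms by (simp add: sum.neutral)
  finally show ?thesis .
qed

lemma mixture_row_sum:
  fixes P :: "nat \<Rightarrow> nat \<Rightarrow> 'a::comm_semiring_1" and W :: "nat \<Rightarrow> nat \<Rightarrow> nat \<Rightarrow> 'a"
  assumes "\<And>x. x < dX \<Longrightarrow> (\<Sum>a<dA. P x a) = s"
    and "\<And>x a. x < dX \<Longrightarrow> a < dA \<Longrightarrow> (\<Sum>a'<dA'. W x a a') = c x" "(\<Sum>x<dX. c x) = 1"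
  shows "(\<Sum>a'<dA'. \<Sum>x<dX. \<Sum>a<dA. P x a * W x a a') = s"
proof -
  have "(\<Sum>a'<dA'. \<Sum>x<dX. \<Sum>a<dA. P x a * W x a a') = (\<Sum>x<dX. \<Sum>a<dA. P x a * (\<Sum>a'<dA'. W x a a'))"
    unfolding sum_distrib_left by (subst sum.swap, rule sum.cong[OF refl], rule sum.swap)
  also have "\<dots> = (\<Sum>x<dX. c x * (\<Sum>a<dA. P x a))"
    using assms(2) by (intro sum.cong refl) (simp add: sum_distrib_left mult.commute)
  also have "\<dots> = (\<Sum>x<dX. c x * s)"
    using assms(1) by (intro sum.cong refl) simp
  also have "\<dots> = s" using assms(3) by (simp add: sum_distrib_right[symmetric])
  finally show ?thesis .
qed

section \<open>Positive semidefinite operators\<close>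

definition quad_form :: "'i set \<Rightarrow> 'i op \<Rightarrow> ('i \<Rightarrow> complex) \<Rightarrow> complex" where
  "quad_form S \<rho> v = (\<Sum>i\<in>S. \<Sum>i'\<in>S. cnj (v i) * \<rho> i i' * v i')"

lemma psd_iff_quad_form: "psd S \<rho> \<longleftrightarrow> (\<forall>v. 0 \<le> quad_form S \<rho> v)"
  unfolding psd_def quad_form_def nonneg_def less_eq_complex_def by auto

lemma psd_cong:
  assumes "psd S \<rho>" "\<And>i j. i \<in> S \<Longrightarrow> j \<in> S \<Longrightarrow> \<rho> i j = \<sigma> i j"
  shows "psd S \<sigma>"
proof -
  have "quad_form S \<rho> v = quad_form S \<sigma> v" for v
    unfolding quad_form_def using assms(2) by (intro sum.cong refl) simp
  then show ?thesis using assms(1) unfolding psd_iff_quad_form by simp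
qed

lemma quad_form_restrict:
  assumes "finite S" "T \<subseteq> S" "\<And>i. i \<in> S - T \<Longrightarrow> v i = 0"
  shows "quad_form S \<rho> v = quad_form T \<rho> v"
proof -
  have "quad_form S \<rho> v = (\<Sum>i\<in>T. \<Sum>i'\<in>S. cnj (v i) * \<rho> i i' * v i')"
    unfolding quad_form_def by (rule sum.mono_neutral_right) (use assms in auto)
  also have "\<dots> = quad_form T \<rho> v"
    unfolding quad_form_def by (intro sum.cong refl sum.mono_neutral_right) (use assms in auto)
  finally show ?thesis .
qed

lemma psd_subset:
  assumes "finite S" "T \<subseteq> S" "psd S \<rho>"
  shows "psd T \<rho>"
  unfolding psd_iff_quad_form
proof
  fix v :: "_ \<Rightarrow> complex"
  let ?w = "\<lambda>i. if i \<in> T then v i else 0"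
  have "quad_form T \<rho> v = quad_form T \<rho> ?w"
    unfolding quad_form_def by (intro sum.cong refl) auto
  also have "\<dots> = quad_form S \<rho> ?w"
    by (rule quad_form_restrict[symmetric]) (use assms in auto)
  finally show "0 \<le> quad_form T \<rho> v"
    using assms(3) unfolding psd_iff_quad_form by simp
qed

lemma psd_diag_nonneg:
  assumes "finite S" "psd S \<rho>" "i \<in> S"
  shows "0 \<le> \<rho> i i"
proof -
  let ?v = "\<lambda>s. if s = i then 1 else 0"
  have "quad_form S \<rho> ?v = quad_form {i} \<rho> ?v"
    by (rule quad_form_restrict) (use assms in auto)
  also have "\<dots> = \<rho> i i" by (simp add: quad_form_def)
  finally show ?thesis using assms(2) unfolding psd_iff_quad_form by metis
qed

lemma quad_form_two_points:
  assumes "finite S" "i \<in> S" "j \<in> S" "i \<noteq> j"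
  shows "quad_form S \<rho> (\<lambda>s. if s = i then \<alpha> else if s = j then \<beta> else 0) =
    cnj \<alpha> * \<rho> i i * \<alpha> + cnj \<alpha> * \<rho> i j * \<beta> + cnj \<beta> * \<rho> j i * \<alpha> + cnj \<beta> * \<rho> j j * \<beta>"
proof -
  have "quad_form S \<rho> (\<lambda>s. if s = i then \<alpha> else if s = j then \<beta> else 0) =
      quad_form {i, j} \<rho> (\<lambda>s. if s = i then \<alpha> else if s = j then \<beta> else 0)"
    by (rule quad_form_restrict) (use assms in auto)
  also have "\<dots> = cnj \<alpha> * \<rho> i i * \<alpha> + cnj \<alpha> * \<rho> i j * \<beta> + cnj \<beta> * \<rho> j i * \<alpha> + cnj \<beta> * \<rho> j j * \<beta>"
    using assms(4) by (simp add: quad_form_def)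
  finally show ?thesis .
qed

lemma psd_two_points:
  assumes "finite S" "psd S \<rho>" "i \<in> S" "j \<in> S" "i \<noteq> j"
  shows "0 \<le> cnj \<alpha> * \<rho> i i * \<alpha> + cnj \<alpha> * \<rho> i j * \<beta> + cnj \<beta> * \<rho> j i * \<alpha> + cnj \<beta> * \<rho> j j * \<beta>"
proof -
  have "0 \<le> quad_form S \<rho> (\<lambda>s. if s = i then \<alpha> else if s = j then \<beta> else 0)"
    using assms(2) unfolding psd_iff_quad_form by blast
  then show ?thesis unfolding quad_form_two_points[OF assms(1,3-5)] .
qed

lemma psd_hermitian:
  assumes "finite S" "psd S \<rho>" "i \<in> S" "j \<in> S"
  shows "\<rho> i j = cnj (\<rho> j i)"
proof (cases "i = j")
  case True
  then show ?thesis
    using psd_diag_nonneg[OF assms(1-3)] by (simp add: less_eq_complex_def complex_eq_iff)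
next
  case False
  note two = psd_two_points[OF assms False]
  have "Im (\<rho> i i) = 0" "Im (\<rho> j j) = 0"
    using psd_diag_nonneg[OF assms(1,2)] assms(3,4) by (auto simp: less_eq_complex_def)
  moreover have "Im (\<rho> i j) + Im (\<rho> j i) = 0" using two[of 1 1] calculation
    by (simp add: less_eq_complex_def)
  moreover have "Re (\<rho> i j) - Re (\<rho> j i) = 0" using two[of 1 \<i>] calculation
    by (simp add: less_eq_complex_def)
  ultimately show ?thesis by (simp add: complex_eq_iff)
qed

lemma psd_diag_zero_imp_zero:
  assumes "finite S" "psd S \<rho>" "i \<in> S" "j \<in> S" "\<rho> i i = 0"
  shows "\<rho> i j = 0"
proof (rule ccontr)
  assume nz: "\<rho> i j \<noteq> 0"
  with assms(5) have "i \<noteq> j" by auto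
  define c where "c = complex_of_real ((Re (\<rho> j j) + 1) / 2)"
  define \<alpha> where "\<alpha> = - c / cnj (\<rho> i j)"
  have "0 \<le> cnj \<alpha> * \<rho> i i * \<alpha> + cnj \<alpha> * \<rho> i j * 1 + cnj 1 * \<rho> j i * \<alpha> + cnj 1 * \<rho> j j * 1"
    by (rule psd_two_points[OF assms(1-4) \<open>i \<noteq> j\<close>])
  also have "\<dots> = \<rho> j j - 2 * c"
    using nz psd_hermitian[OF assms(1,2,4,3)] assms(5) by (simp add: \<alpha>_def c_def field_simps)
  finally show False by (simp add: c_def less_eq_complex_def)
qed

lemma quad_form_add_basis:
  assumes "finite T" "t0 \<in> T"
  shows "quad_form T \<rho> (\<lambda>t. v t + (if t = t0 then \<gamma> else 0)) =
    quad_form T \<rho> v + (\<Sum>t\<in>T. cnj (v t) * \<rho> t t0) * \<gamma> + cnj \<gamma> * (\<Sum>t'\<in>T. \<rho> t0 t' * v t')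
      + cnj \<gamma> * \<rho> t0 t0 * \<gamma>"
proof -
  let ?e = "\<lambda>t. if t = t0 then \<gamma> else 0"
  have "quad_form T \<rho> (\<lambda>t. v t + ?e t) = quad_form T \<rho> v + (\<Sum>t\<in>T. \<Sum>t'\<in>T. cnj (v t) * \<rho> t t' * ?e t')
      + (\<Sum>t\<in>T. \<Sum>t'\<in>T. cnj (?e t) * \<rho> t t' * v t') + (\<Sum>t\<in>T. \<Sum>t'\<in>T. cnj (?e t) * \<rho> t t' * ?e t')"
    unfolding quad_form_def sum.distrib[symmetric]
    by (intro sum.cong refl) (simp add: algebra_simps)
  also have "\<dots> = quad_form T \<rho> v + (\<Sum>t\<in>T. cnj (v t) * \<rho> t t0) * \<gamma>
      + cnj \<gamma> * (\<Sum>t'\<in>T. \<rho> t0 t' * v t') + cnj \<gamma> * \<rho> t0 t0 * \<gamma>"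
    using assms by (subst (2) sum.swap) (simp add: sum_distrib_left sum_distrib_right mult.assoc if_distrib[of cnj]
        if_distrib[of "\<lambda>x. x * _"] if_distrib[of "(*) _"] sum.delta cong: if_cong)
  finally show ?thesis .
qed

lemma psd_schur_complement:
  assumes "finite T" "psd T \<rho>" "t0 \<in> T" "\<rho> t0 t0 \<noteq> 0"
  shows "psd T (\<lambda>t t'. \<rho> t t' - \<rho> t t0 * \<rho> t0 t' / \<rho> t0 t0)"
  unfolding psd_iff_quad_form
proof
  fix v
  let ?c = "\<rho> t0 t0"
  define \<beta> where "\<beta> = (\<Sum>t'\<in>T. \<rho> t0 t' * v t')"
  have c_real: "cnj ?c = ?c" using psd_hermitian[OF assms(1,2,3,3)] by simp
  have col: "(\<Sum>t\<in>T. cnj (v t) * \<rho> t t0) = cnj \<beta>"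
    unfolding \<beta>_def cnj_sum
    by (intro sum.cong refl) (simp add: psd_hermitian[OF assms(1,2) _ assms(3)] mult.commute)
  have "quad_form T (\<lambda>t t'. \<rho> t t' - \<rho> t t0 * \<rho> t0 t' / ?c) v =
      quad_form T \<rho> v - (\<Sum>t\<in>T. cnj (v t) * \<rho> t t0) * \<beta> / ?c"
    unfolding quad_form_def \<beta>_def sum_divide_distrib sum_product
    by (simp add: sum_subtractf[symmetric] algebra_simps diff_divide_distrib)
  also have "\<dots> = quad_form T \<rho> (\<lambda>t. v t + (if t = t0 then - \<beta> / ?c else 0))"
    unfolding quad_form_add_basis[OF assms(1,3)] col \<beta>_def[symmetric] using assms(4) c_real
    by (simp add: field_simps)
  finally show "0 \<le> quad_form T (\<lambda>t t'. \<rho> t t' - \<rho> t t0 * \<rho> t0 t' / ?c) v"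
    using assms(2) unfolding psd_iff_quad_form by simp
qed

lemma complex_inverse_nonneg: "0 \<le> z \<Longrightarrow> 0 \<le> inverse (z::complex)"
  by (simp add: less_eq_complex_def)

lemma psd_frobenius_rank_one:
  assumes "finite T" "psd T \<rho>" "psd T M" "t0 \<in> T"
  shows "0 \<le> (\<Sum>t\<in>T. \<Sum>t'\<in>T. \<rho> t t0 * \<rho> t0 t' * M t t')"
proof -
  have "quad_form T M (\<lambda>t. \<rho> t0 t) = (\<Sum>t\<in>T. \<Sum>t'\<in>T. \<rho> t t0 * \<rho> t0 t' * M t t')"
    unfolding quad_form_def by (intro sum.cong refl) (simp add: psd_hermitian[OF assms(1,2) _ assms(4)])
  then show ?thesis using assms(3) unfolding psd_iff_quad_form by metis
qed

text \<open>Induction on T: at a vanishing diagonal entry the whole row and column vanish; otherwise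
  \<rho> is its Schur complement at t0, which has a zero row and column, plus a rank-one term.\<close>

lemma psd_frobenius_nonneg:
  assumes "finite T" "psd T \<rho>" "psd T M"
  shows "0 \<le> (\<Sum>t\<in>T. \<Sum>t'\<in>T. \<rho> t t' * M t t')"
  using assms
proof (induction T arbitrary: \<rho> rule: finite_induct)
  case empty
  then show ?case by simp
next
  case (insert t0 F)
  let ?T = "insert t0 F"
  have fin: "finite ?T" using insert(1) by simp
  have zero_row: "0 \<le> (\<Sum>t\<in>?T. \<Sum>t'\<in>?T. \<sigma> t t' * M t t')"
    if \<sigma>: "psd ?T \<sigma>" and row: "\<And>t. t \<in> ?T \<Longrightarrow> \<sigma> t0 t = 0 \<and> \<sigma> t t0 = 0" for \<sigma>
  proof -
    have "(\<Sum>t\<in>?T. \<Sum>t'\<in>?T. \<sigma> t t' * M t t') = (\<Sum>t\<in>F. \<Sum>t'\<in>F. \<sigma> t t' * M t t')"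
      by (rule sum_sum_insert_zero_cross[OF insert(1,2)]) (simp add: row)
    then show ?thesis
      using insert.IH[OF psd_subset[OF fin subset_insertI \<sigma>] psd_subset[OF fin subset_insertI insert(5)]]
      by simp
  qed
  show ?case
  proof (cases "\<rho> t0 t0 = 0")
    case True
    show ?thesis
    proof (rule zero_row[OF insert(4)])
      fix t assume t: "t \<in> ?T"
      have "\<rho> t0 t = 0" by (rule psd_diag_zero_imp_zero[OF fin insert(4) _ t True]) simp
      moreover have "\<rho> t t0 = cnj (\<rho> t0 t)" by (rule psd_hermitian[OF fin insert(4) t]) simp
      ultimately show "\<rho> t0 t = 0 \<and> \<rho> t t0 = 0" by simp
    qed
  next
    case False
    let ?c = "\<rho> t0 t0"
    let ?s = "\<lambda>t t'. \<rho> t t' - \<rho> t t0 * \<rho> t0 t' / ?c"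
    have t0: "t0 \<in> ?T" by simp
    have schur: "0 \<le> (\<Sum>t\<in>?T. \<Sum>t'\<in>?T. ?s t t' * M t t')"
      by (rule zero_row[OF psd_schur_complement[OF fin insert(4) t0 False]]) (use False in simp)
    have rank_one: "0 \<le> inverse ?c * (\<Sum>t\<in>?T. \<Sum>t'\<in>?T. \<rho> t t0 * \<rho> t0 t' * M t t')"
      using psd_frobenius_rank_one[OF fin insert(4,5) t0] psd_diag_nonneg[OF fin insert(4) t0]
      by (simp add: complex_inverse_nonneg)
    have "(\<Sum>t\<in>?T. \<Sum>t'\<in>?T. \<rho> t t' * M t t') = (\<Sum>t\<in>?T. \<Sum>t'\<in>?T. ?s t t' * M t t')
        + inverse ?c * (\<Sum>t\<in>?T. \<Sum>t'\<in>?T. \<rho> t t0 * \<rho> t0 t' * M t t')"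
      unfolding sum_distrib_left sum.distrib[symmetric]
      by (intro sum.cong refl) (use False in \<open>simp add: field_simps\<close>)
    then show ?thesis using schur rank_one by simp
  qed
qed

lemma psd_optensor:
  fixes \<omega> :: "'s op" and \<rho> :: "'t op"
  assumes "finite S" "finite T" "psd S \<omega>" "psd T \<rho>"
  shows "psd (S \<times> T) (optensor \<omega> \<rho>)"
  unfolding psd_iff_quad_form
proof
  fix v :: "'s \<times> 't \<Rightarrow> complex"
  define M where "M = (\<lambda>t t'. \<Sum>s\<in>S. \<Sum>s'\<in>S. cnj (v (s,t)) * \<omega> s s' * v (s',t'))"
  have "quad_form (S \<times> T) (optensor \<omega> \<rho>) v
      = (\<Sum>s\<in>S. \<Sum>t\<in>T. \<Sum>s'\<in>S. \<Sum>t'\<in>T. \<rho> t t' * (cnj (v (s,t)) * \<omega> s s' * v (s',t')))"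
    unfolding quad_form_def sum.cartesian_product' optensor_def
    by (intro sum.cong refl) (simp add: algebra_simps)
  also have "\<dots> = (\<Sum>s\<in>S. \<Sum>s'\<in>S. \<Sum>t\<in>T. \<Sum>t'\<in>T. \<rho> t t' * (cnj (v (s,t)) * \<omega> s s' * v (s',t')))"
    by (rule sum.cong[OF refl], rule sum.swap)
  also have "\<dots> = (\<Sum>t\<in>T. \<Sum>t'\<in>T. \<rho> t t' * M t t')"
    unfolding M_def sum_distrib_left by (rule sum_swap_pairs)
  finally have eq: "quad_form (S \<times> T) (optensor \<omega> \<rho>) v = (\<Sum>t\<in>T. \<Sum>t'\<in>T. \<rho> t t' * M t t')" .
  have "quad_form T M w = quad_form S \<omega> (\<lambda>s. \<Sum>t\<in>T. v (s,t) * w t)" for w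
  proof -
    have "quad_form T M w = (\<Sum>t\<in>T. \<Sum>t'\<in>T. \<Sum>s\<in>S. \<Sum>s'\<in>S.
        cnj (v (s,t) * w t) * \<omega> s s' * (v (s',t') * w t'))"
      unfolding quad_form_def M_def sum_distrib_left sum_distrib_right
      by (intro sum.cong refl) (simp add: algebra_simps)
    also have "\<dots> = (\<Sum>s\<in>S. \<Sum>s'\<in>S. \<Sum>t\<in>T. \<Sum>t'\<in>T.
        cnj (v (s,t) * w t) * \<omega> s s' * (v (s',t') * w t'))"
      by (rule sum_swap_pairs)
    also have "\<dots> = quad_form S \<omega> (\<lambda>s. \<Sum>t\<in>T. v (s,t) * w t)"
      unfolding quad_form_def cnj_sum sum_distrib_left sum_distrib_right
      by (rule sum.cong[OF refl], rule sum.cong[OF refl], rule sum.swap)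
    finally show ?thesis .
  qed
  then have "psd T M" using assms(3) unfolding psd_iff_quad_form by simp
  then show "0 \<le> quad_form (S \<times> T) (optensor \<omega> \<rho>) v"
    unfolding eq by (rule psd_frobenius_nonneg[OF assms(2,4)])
qed

lemma psd_reindex:
  assumes "finite S" "inj_on f K" "f ` K \<subseteq> S" "psd S \<rho>"
  shows "psd K (\<lambda>k k'. \<rho> (f k) (f k'))"
  unfolding psd_iff_quad_form
proof
  fix w :: "_ \<Rightarrow> complex"
  let ?v = "\<lambda>i. if i \<in> f ` K then w (the_inv_into K f i) else 0"
  have "quad_form K (\<lambda>k k'. \<rho> (f k) (f k')) w = quad_form (f ` K) \<rho> ?v"
    unfolding quad_form_def sum.reindex[OF assms(2)] using assms(2)
    by (intro sum.cong refl) (simp add: the_inv_into_f_f)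
  also have "\<dots> = quad_form S \<rho> ?v"
    by (rule quad_form_restrict[symmetric]) (use assms in auto)
  finally show "0 \<le> quad_form K (\<lambda>k k'. \<rho> (f k) (f k')) w"
    using assms(4) unfolding psd_iff_quad_form by simp
qed

lemma psd_slice_fst:
  assumes "finite (S \<times> K)" "psd (S \<times> K) \<rho>" "s \<in> S"
  shows "psd K (\<lambda>k k'. \<rho> (s,k) (s,k'))"
  by (rule psd_reindex[OF assms(1) _ _ assms(2)]) (use assms(3) in \<open>auto simp: inj_on_def\<close>)

lemma psd_slice_snd:
  assumes "finite (T \<times> K)" "psd (T \<times> K) \<rho>" "k \<in> K"
  shows "psd T (\<lambda>t t'. \<rho> (t,k) (t',k))"
  by (rule psd_reindex[OF assms(1) _ _ assms(2)]) (use assms(3) in \<open>auto simp: inj_on_def\<close>)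

lemma psd_sum:
  assumes "\<And>i. i \<in> I \<Longrightarrow> psd S (f i)"
  shows "psd S (\<lambda>s s'. \<Sum>i\<in>I. f i s s')"
proof -
  have "quad_form S (\<lambda>s s'. \<Sum>i\<in>I. f i s s') v = (\<Sum>i\<in>I. quad_form S (f i) v)" for v
    unfolding quad_form_def sum_distrib_left sum_distrib_right
    by (subst sum.swap, intro sum.cong refl, subst sum.swap) (simp add: algebra_simps)
  then show ?thesis using assms unfolding psd_iff_quad_form by (simp add: sum_nonneg)
qed

lemma psd_scale:
  assumes "0 \<le> c" "psd S \<rho>"
  shows "psd S (\<lambda>s s'. c * \<rho> s s')"
proof -
  have "quad_form S (\<lambda>s s'. c * \<rho> s s') v = c * quad_form S \<rho> v" for v
    unfolding quad_form_def sum_distrib_left by (intro sum.cong refl) (simp add: algebra_simps)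
  then show ?thesis using assms unfolding psd_iff_quad_form by simp
qed

lemma cnj_mult_self_nonneg: "0 \<le> cnj z * z"
  by (simp add: mult.commute[of "cnj z"] complex_mult_cnj less_eq_complex_def)

lemma complex_of_real_nonneg: "0 \<le> r \<Longrightarrow> 0 \<le> complex_of_real r"
  by (simp add: less_eq_complex_def)

lemma nonneg_complex_of_Re: "0 \<le> z \<Longrightarrow> complex_of_real (Re z) = z"
  by (simp add: less_eq_complex_def complex_eq_iff)

lemma psd_ketbra:
  assumes "finite S" "i \<in> S"
  shows "psd S (ketbra i i)"
  unfolding psd_iff_quad_form
proof
  fix v
  have "quad_form S (ketbra i i) v = (\<Sum>s\<in>S. \<Sum>s'\<in>S. if s = i \<and> s' = i then cnj (v s) * v s' else 0)"
    unfolding quad_form_def ketbra_def by (intro sum.cong refl) simp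
  also have "\<dots> = cnj (v i) * v i" by (rule sum_sum_delta[OF assms(1,1,2,2)])
  finally show "0 \<le> quad_form S (ketbra i i) v" by (simp only: cnj_mult_self_nonneg)
qed

lemma psd_rank_one: "psd S (\<lambda>s s'. cnj (w s) * w s')"
  unfolding psd_iff_quad_form
proof
  fix v
  have "quad_form S (\<lambda>s s'. cnj (w s) * w s') v = cnj (\<Sum>s\<in>S. w s * v s) * (\<Sum>s\<in>S. w s * v s)"
    unfolding quad_form_def cnj_sum sum_product by (intro sum.cong refl) (simp add: algebra_simps)
  then show "0 \<le> quad_form S (\<lambda>s s'. cnj (w s) * w s') v" by (simp only: cnj_mult_self_nonneg)
qed

lemma psd_trace_nonneg:
  assumes "finite T" "psd T \<omega>"
  shows "0 \<le> trace T \<omega>"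
  unfolding trace_def by (rule sum_nonneg) (rule psd_diag_nonneg[OF assms])

lemma trace_ketbra:
  assumes "finite S" "i \<in> S"
  shows "trace S (ketbra i j) = (if i = j then 1 else 0)"
  using assms unfolding trace_def ketbra_def by (auto simp: sum.delta intro!: sum.neutral)

lemma density_ketbra:
  assumes "finite S" "i \<in> S"
  shows "density S (ketbra i i)"
  using psd_ketbra[OF assms] trace_ketbra[OF assms] unfolding density_def by simp

lemma density_superposition:
  assumes "finite S" "i \<in> S" "j \<in> S" "i \<noteq> j" "cnj \<beta> * \<beta> = 1"
  defines "w \<equiv> \<lambda>s. if s = i then 1 else if s = j then \<beta> else 0"
  shows "density S (\<lambda>s s'. cnj (w s) * w s' / 2)"
  unfolding density_def
proof
  show "psd S (\<lambda>s s'. cnj (w s) * w s' / 2)"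
    using psd_scale[of "1/2" S, OF _ psd_rank_one] by (simp add: less_eq_complex_def)
  have "trace S (\<lambda>s s'. cnj (w s) * w s' / 2) = (\<Sum>s\<in>{i,j}. cnj (w s) * w s / 2)"
    unfolding trace_def by (rule sum.mono_neutral_right) (use assms in \<open>auto simp: w_def\<close>)
  then show "trace S (\<lambda>s s'. cnj (w s) * w s' / 2) = 1" using assms(4,5) by (simp add: w_def)
qed

text \<open>Test against the pure states of the basis vectors k and of the superpositions of i and
  \<beta> j for \<beta> = 1 and \<beta> = \<i>.\<close>

lemma zero_if_orthogonal_to_densities:
  assumes "finite S" "\<And>\<psi>. density S \<psi> \<Longrightarrow> (\<Sum>s\<in>S. \<Sum>s'\<in>S. c s s' * \<psi> s s') = 0"
    and "i \<in> S" "j \<in> S"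
  shows "c i j = 0"
proof -
  have diag: "c k k = 0" if "k \<in> S" for k
  proof -
    have "(\<Sum>s\<in>S. \<Sum>s'\<in>S. c s s' * ketbra k k s s') = c k k"
      using sum_sum_delta[OF assms(1,1) that that, of c] unfolding ketbra_def
      by (simp add: if_distrib[of "(*) _"] cong: if_cong)
    then show ?thesis using assms(2)[OF density_ketbra[OF assms(1) that]] by simp
  qed
  show ?thesis
  proof (cases "i = j")
    case True
    then show ?thesis using diag assms(3) by simp
  next
    case False
    have pair: "c i j * \<beta> + cnj \<beta> * c j i = 0" if \<beta>: "cnj \<beta> * \<beta> = 1" for \<beta>
    proof -
      define w where "w = (\<lambda>s. if s = i then 1 else if s = j then \<beta> else 0)"
      have dens: "density S (\<lambda>s s'. cnj (w s) * w s' / 2)"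
        unfolding w_def by (rule density_superposition[OF assms(1,3,4) False \<beta>])
      have "(\<Sum>s\<in>S. \<Sum>s'\<in>S. c s s' * (cnj (w s) * w s' / 2)) = quad_form S c w / 2"
        unfolding quad_form_def sum_divide_distrib by (intro sum.cong refl) (simp add: algebra_simps)
      then have "quad_form S c w = 0" using assms(2)[OF dens] by simp
      then show ?thesis
        using quad_form_two_points[OF assms(1,3,4) False, of c 1 \<beta>] diag assms(3,4)
        unfolding w_def by simp
    qed
    have "c i j + c j i = 0" using pair[of 1] by simp
    moreover have "c i j * \<i> - \<i> * c j i = 0" using pair[of \<i>] by simp
    ultimately show ?thesis by (simp add: algebra_simps complex_eq_iff)
  qed
qed

section \<open>Kernels of linear maps\<close>

lemma optensor_ketbra: "optensor (ketbra a b) (ketbra c d) = ketbra (a,c) (b,d)"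
  unfolding optensor_def ketbra_def by (auto intro!: ext)

lemma kapply_ketbra:
  assumes "finite S" "i \<in> S" "j \<in> S"
  shows "kapply K S (ketbra i j) = K i j"
proof (intro ext)
  fix k k'
  have "kapply K S (ketbra i j) k k' = (\<Sum>s\<in>S. \<Sum>s'\<in>S. if s = i \<and> s' = j then K s s' k k' else 0)"
    unfolding kapply_def ketbra_def by (intro sum.cong refl) simp
  then show "kapply K S (ketbra i j) k k' = K i j k k'"
    using sum_sum_delta[OF assms(1,1,2,3)] by simp
qed

lemma kapply_ketbra_pair:
  assumes "finite X" "finite Y" "x \<in> X" "x2 \<in> X" "y \<in> Y" "y2 \<in> Y"
  shows "kapply R (X \<times> Y) (optensor (ketbra x x2) (ketbra y y2)) = R (x,y) (x2,y2)"
  unfolding optensor_ketbra using assms by (intro kapply_ketbra) auto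

lemma kapply_optensor_ketbra_left:
  assumes "finite X" "finite Y" "x \<in> X" "x2 \<in> X"
  shows "kapply R (X \<times> Y) (optensor (ketbra x x2) \<psi>) v v' =
    (\<Sum>y\<in>Y. \<Sum>y2\<in>Y. R (x,y) (x2,y2) v v' * \<psi> y y2)"
proof -
  have "kapply R (X \<times> Y) (optensor (ketbra x x2) \<psi>) v v' =
     (\<Sum>x1\<in>X. \<Sum>x3\<in>X. \<Sum>y\<in>Y. \<Sum>y2\<in>Y. if x1 = x \<and> x3 = x2 then R (x1,y) (x3,y2) v v' * \<psi> y y2 else 0)"
    unfolding kapply_def sum.cartesian_product' optensor_def ketbra_def
    by (rule sum.cong[OF refl], rule trans[OF sum.swap]) (auto intro!: sum.cong)
  also have "\<dots> = (\<Sum>y\<in>Y. \<Sum>y2\<in>Y. R (x,y) (x2,y2) v v' * \<psi> y y2)"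
    using sum_sum_delta[OF assms(1,1,3,4)] by (simp add: sum_if_left)
  finally show ?thesis .
qed

lemma kapply_optensor_ketbra_right:
  assumes "finite X" "finite Y" "y \<in> Y" "y2 \<in> Y"
  shows "kapply R (X \<times> Y) (optensor \<xi> (ketbra y y2)) v v' =
    (\<Sum>x\<in>X. \<Sum>x2\<in>X. R (x,y) (x2,y2) v v' * \<xi> x x2)"
proof -
  have "kapply R (X \<times> Y) (optensor \<xi> (ketbra y y2)) v v' =
     (\<Sum>x\<in>X. \<Sum>x2\<in>X. \<Sum>y1\<in>Y. \<Sum>y3\<in>Y. if y1 = y \<and> y3 = y2 then R (x,y1) (x2,y3) v v' * \<xi> x x2 else 0)"
    unfolding kapply_def sum.cartesian_product' optensor_def ketbra_def
    by (rule sum.cong[OF refl], rule trans[OF sum.swap]) (auto intro!: sum.cong)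
  also have "\<dots> = (\<Sum>x\<in>X. \<Sum>x2\<in>X. R (x,y) (x2,y2) v v' * \<xi> x x2)"
    by (intro sum.cong refl sum_sum_delta) (use assms in auto)
  finally show ?thesis .
qed

lemma kapply_ktensor_kid:
  fixes k k1 k2 :: nat
  assumes "finite S" "k1 < k" "k2 < k"
  shows "kapply (ktensor K kid) (S \<times> {..<k}) \<rho> (t,k1) (t',k2) =
    (\<Sum>s\<in>S. \<Sum>s'\<in>S. K s s' t t' * \<rho> (s,k1) (s',k2))"
proof -
  have "kapply (ktensor K kid) (S \<times> {..<k}) \<rho> (t,k1) (t',k2) =
     (\<Sum>s\<in>S. \<Sum>s'\<in>S. \<Sum>l<k. \<Sum>l'<k. if l = k1 \<and> l' = k2 then K s s' t t' * \<rho> (s,l) (s',l') else 0)"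
    unfolding kapply_def ktensor_def kid_def sum.cartesian_product'
    by (intro sum.cong refl, subst sum.swap) (auto intro!: sum.cong)
  also have "\<dots> = (\<Sum>s\<in>S. \<Sum>s'\<in>S. K s s' t t' * \<rho> (s,k1) (s',k2))"
    by (intro sum.cong refl sum_sum_delta) (use assms in auto)
  finally show ?thesis .
qed

lemma psd_kapply_of_CP:
  assumes "is_CP S T K" "finite S" "finite T" "psd S \<rho>"
  shows "psd T (kapply K S \<rho>)"
proof -
  let ?e = "ketbra (0::nat) 0"
  have "psd (S \<times> {..<1}) (optensor \<rho> ?e)"
    by (rule psd_optensor[OF assms(2) _ assms(4) psd_ketbra]) auto
  then have "psd (T \<times> {..<1}) (kapply (ktensor K kid) (S \<times> {..<1}) (optensor \<rho> ?e))"
    using assms(1) unfolding is_CP_def by blast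
  then have "psd T (\<lambda>t t'. kapply (ktensor K kid) (S \<times> {..<1}) (optensor \<rho> ?e) (t,0) (t',0))"
    by (rule psd_slice_snd[rotated]) (use assms(3) in auto)
  then show ?thesis
    by (rule psd_cong) (simp add: kapply_ktensor_kid[OF assms(2)] optensor_def ketbra_def, simp add: kapply_def)
qed

lemma psd_block_of_CP:
  assumes "is_CP S T K" "finite S" "finite T" "i \<in> S"
  shows "psd T (K i i)"
  using psd_kapply_of_CP[OF assms(1-3) psd_ketbra[OF assms(2,4)]] kapply_ketbra[OF assms(2,4,4), of K]
  by simp

lemma CPTP_trace_block:
  assumes "is_CPTP S T K" "finite S" "i \<in> S" "i' \<in> S"
  shows "(\<Sum>j\<in>T. K i i' j j) = (if i = i' then 1 else 0)"
  using assms(1) kapply_ketbra[OF assms(2-4)] trace_ketbra[OF assms(2,3)]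
  unfolding is_CPTP_def trace_def by metis

lemma CPTP_trace_block_product:
  fixes P :: "(nat, nat \<times> nat) kern" and dX' x' :: nat
  assumes "is_CPTP {..<dX'} ({..<dX} \<times> {..<m}) P" "x' < dX'"
  shows "(\<Sum>x<dX. \<Sum>k<m. P x' x' (x,k) (x,k)) = 1"
  using CPTP_trace_block[OF assms(1) finite_lessThan, of x' x'] assms(2)
  by (simp add: sum.cartesian_product')

lemma kcomp_kperm:
  assumes "finite S" "inj_on \<sigma> S" "j \<in> S" "j' \<in> S"
  shows "kcomp K S (kperm \<sigma>) i i' (\<sigma> j) (\<sigma> j') = K i i' j j'"
proof -
  have "kcomp K S (kperm \<sigma>) i i' (\<sigma> j) (\<sigma> j') = (\<Sum>s\<in>S. \<Sum>s'\<in>S. if s = j \<and> s' = j' then K i i' s s' else 0)"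
    unfolding kcomp_def kperm_def
    using assms(2-4) by (intro sum.cong refl) (auto dest: inj_onD)
  then show ?thesis using sum_sum_delta[OF assms(1,1,3,4)] by simp
qed

lemma kcomp_ktensor_kid:
  assumes "finite S" "finite M" "m \<in> M" "m' \<in> M"
  shows "kcomp K (S \<times> M) (ktensor R kid) i i' (v,m) (v',m') =
    (\<Sum>s\<in>S. \<Sum>s'\<in>S. K i i' (s,m) (s',m') * R s s' v v')"
proof -
  have "kcomp K (S \<times> M) (ktensor R kid) i i' (v,m) (v',m') =
     (\<Sum>s\<in>S. \<Sum>s'\<in>S. \<Sum>l\<in>M. \<Sum>l'\<in>M. if l = m \<and> l' = m' then K i i' (s,l) (s',l') * R s s' v v' else 0)"
    unfolding kcomp_def ktensor_def kid_def sum.cartesian_product'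
    by (intro sum.cong refl, subst sum.swap) (auto intro!: sum.cong)
  also have "\<dots> = (\<Sum>s\<in>S. \<Sum>s'\<in>S. K i i' (s,m) (s',m') * R s s' v v')"
    by (intro sum.cong refl sum_sum_delta) (use assms in auto)
  finally show ?thesis .
qed

lemma is_resource_dims:
  assumes "is_resource dX tX dY tY dA tA dB tB R"
  shows "0 < dX" "0 < dY"
  using assms unfolding is_resource_def Let_def valid_sys_def by auto

lemma resource_block_psd:
  assumes "is_resource dX tX dY tY dA tA dB tB R" "x < dX" "y < dY"
  shows "psd ({..<dA} \<times> {..<dB}) (R (x,y) (x,y))"
proof -
  have "is_CP ({..<dX} \<times> {..<dY}) ({..<dA} \<times> {..<dB}) R"
    using assms(1) unfolding is_resource_def Let_def by (elim conjE)
  then show ?thesis by (rule psd_block_of_CP) (use assms in auto)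
qed

lemma resource_diag_nonneg:
  assumes "is_resource dX tX dY tY dA tA dB tB R" "x < dX" "y < dY" "a < dA" "b < dB"
  shows "0 \<le> R (x,y) (x,y) (a,b) (a,b)"
  using psd_diag_nonneg[OF _ resource_block_psd[OF assms(1-3)]] assms(4,5) by simp

lemma resource_trace:
  assumes "is_resource dX tX dY tY dA tA dB tB R" "x < dX" "y < dY"
  shows "(\<Sum>a<dA. \<Sum>b<dB. R (x,y) (x,y) (a,b) (a,b)) = 1"
proof -
  have "\<forall>\<xi> \<psi>. density {..<dX} \<xi> \<longrightarrow> density {..<dY} \<psi> \<longrightarrow>
      trace ({..<dA} \<times> {..<dB}) (kapply R ({..<dX} \<times> {..<dY}) (optensor \<xi> \<psi>)) = 1"
    using assms(1) unfolding is_resource_def Let_def by (elim conjE) assumption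
  then have "trace ({..<dA} \<times> {..<dB}) (kapply R ({..<dX} \<times> {..<dY}) (optensor (ketbra x x) (ketbra y y))) = 1"
    using density_ketbra[of "{..<dX}" x] density_ketbra[of "{..<dY}" y] assms(2,3) by simp
  then show ?thesis
    using assms(2,3) by (simp add: kapply_ketbra_pair trace_def sum.cartesian_product')
qed

lemma resource_no_signalling:
  assumes "is_resource dX tX dY tY dA tA dB tB R" "x < dX" "x2 < dX" "y < dY" "b < dB"
  shows "(\<Sum>a<dA. R (x,y) (x,y) (a,b) (a,b)) = (\<Sum>a<dA. R (x2,y) (x2,y) (a,b) (a,b))"
proof -
  let ?out = "\<lambda>\<xi> \<psi>. kapply R ({..<dX} \<times> {..<dY}) (optensor \<xi> \<psi>)"
  have "\<forall>\<xi> \<xi>' \<psi>. density {..<dX} \<xi> \<longrightarrow> density {..<dX} \<xi>' \<longrightarrow> density {..<dY} \<psi> \<longrightarrow>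
      op_eq_on {..<dB} (\<lambda>b b'. \<Sum>a\<in>{..<dA}. ?out \<xi> \<psi> (a,b) (a,b')) (\<lambda>b b'. \<Sum>a\<in>{..<dA}. ?out \<xi>' \<psi> (a,b) (a,b'))"
    using assms(1) unfolding is_resource_def Let_def by (elim conjE) assumption
  then have "op_eq_on {..<dB} (\<lambda>b b'. \<Sum>a\<in>{..<dA}. ?out (ketbra x x) (ketbra y y) (a,b) (a,b'))
      (\<lambda>b b'. \<Sum>a\<in>{..<dA}. ?out (ketbra x2 x2) (ketbra y y) (a,b) (a,b'))"
    using density_ketbra[of "{..<dX}" x] density_ketbra[of "{..<dX}" x2] density_ketbra[of "{..<dY}" y]
      assms(2-4) by simp
  then show ?thesis using assms(2-5) unfolding op_eq_on_def by (simp add: kapply_ketbra_pair)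
qed

lemma resource_classical_A:
  assumes "is_resource dX tX dY tY dA TC dB tB R" "x < dX" "y < dY"
    and "a < dA" "a2 < dA" "b < dB" "b2 < dB" "a \<noteq> a2"
  shows "R (x,y) (x,y) (a,b) (a2,b2) = 0"
proof -
  have "\<forall>\<xi> \<psi>. density {..<dX} \<xi> \<longrightarrow> density {..<dY} \<psi> \<longrightarrow>
      (\<forall>a\<in>{..<dA}. \<forall>a'\<in>{..<dA}. \<forall>b\<in>{..<dB}. \<forall>b'\<in>{..<dB}. a \<noteq> a' \<longrightarrow>
        kapply R ({..<dX} \<times> {..<dY}) (optensor \<xi> \<psi>) (a,b) (a',b') = 0)"
    using assms(1) unfolding is_resource_def Let_def by (elim conjE) simp
  then have "kapply R ({..<dX} \<times> {..<dY}) (optensor (ketbra x x) (ketbra y y)) (a,b) (a2,b2) = 0"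
    using density_ketbra[of "{..<dX}" x] density_ketbra[of "{..<dY}" y] assms(2-) by blast
  then show ?thesis using assms(2,3) by (simp add: kapply_ketbra_pair)
qed

lemma resource_classical_B:
  assumes "is_resource dX tX dY tY dA tA dB TC R" "x < dX" "y < dY"
    and "a < dA" "a2 < dA" "b < dB" "b2 < dB" "b \<noteq> b2"
  shows "R (x,y) (x,y) (a,b) (a2,b2) = 0"
proof -
  have "\<forall>\<xi> \<psi>. density {..<dX} \<xi> \<longrightarrow> density {..<dY} \<psi> \<longrightarrow>
      (\<forall>a\<in>{..<dA}. \<forall>a'\<in>{..<dA}. \<forall>b\<in>{..<dB}. \<forall>b'\<in>{..<dB}. b \<noteq> b' \<longrightarrow>
        kapply R ({..<dX} \<times> {..<dY}) (optensor \<xi> \<psi>) (a,b) (a',b') = 0)"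
    using assms(1) unfolding is_resource_def Let_def by (elim conjE) simp
  then have "kapply R ({..<dX} \<times> {..<dY}) (optensor (ketbra x x) (ketbra y y)) (a,b) (a2,b2) = 0"
    using density_ketbra[of "{..<dX}" x] density_ketbra[of "{..<dY}" y] assms(2-) by blast
  then show ?thesis using assms(2,3) by (simp add: kapply_ketbra_pair)
qed

lemma resource_classical_X:
  assumes "is_resource dX TC dY tY dA tA dB tB R" "x < dX" "x2 < dX" "x \<noteq> x2" "y < dY" "y2 < dY"
    and "v \<in> {..<dA} \<times> {..<dB}" "v' \<in> {..<dA} \<times> {..<dB}"
  shows "R (x,y) (x2,y2) v v' = 0"
proof (rule zero_if_orthogonal_to_densities[of "{..<dY}" "\<lambda>y y2. R (x,y) (x2,y2) v v'"])
  fix \<psi> assume \<psi>: "density {..<dY} \<psi>"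
  have "\<forall>i\<in>{..<dX}. \<forall>j\<in>{..<dX}. \<forall>\<psi>. i \<noteq> j \<longrightarrow> density {..<dY} \<psi> \<longrightarrow>
      op_eq_on ({..<dA} \<times> {..<dB}) (kapply R ({..<dX} \<times> {..<dY}) (optensor (ketbra i j) \<psi>)) (\<lambda>_ _. 0)"
    using assms(1) unfolding is_resource_def Let_def by (elim conjE) simp
  then have "kapply R ({..<dX} \<times> {..<dY}) (optensor (ketbra x x2) \<psi>) v v' = 0"
    using \<psi> assms(2-4,7,8) unfolding op_eq_on_def by blast
  then show "(\<Sum>y<dY. \<Sum>y2<dY. R (x,y) (x2,y2) v v' * \<psi> y y2) = 0"
    using assms(2,3) by (simp add: kapply_optensor_ketbra_left)
qed (use assms in auto)

lemma resource_classical_Y: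
  assumes "is_resource dX tX dY TC dA tA dB tB R" "x < dX" "x2 < dX" "y < dY" "y2 < dY" "y \<noteq> y2"
    and "v \<in> {..<dA} \<times> {..<dB}" "v' \<in> {..<dA} \<times> {..<dB}"
  shows "R (x,y) (x2,y2) v v' = 0"
proof (rule zero_if_orthogonal_to_densities[of "{..<dX}" "\<lambda>x x2. R (x,y) (x2,y2) v v'"])
  fix \<xi> assume \<xi>: "density {..<dX} \<xi>"
  have "\<forall>i\<in>{..<dY}. \<forall>j\<in>{..<dY}. \<forall>\<xi>. i \<noteq> j \<longrightarrow> density {..<dX} \<xi> \<longrightarrow>
      op_eq_on ({..<dA} \<times> {..<dB}) (kapply R ({..<dX} \<times> {..<dY}) (optensor \<xi> (ketbra i j))) (\<lambda>_ _. 0)"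
    using assms(1) unfolding is_resource_def Let_def by (elim conjE) simp
  then have "kapply R ({..<dX} \<times> {..<dY}) (optensor \<xi> (ketbra y y2)) v v' = 0"
    using \<xi> assms(4-8) unfolding op_eq_on_def by blast
  then show "(\<Sum>x<dX. \<Sum>x2<dX. R (x,y) (x2,y2) v v' * \<xi> x x2) = 0"
    using assms(4,5) by (simp add: kapply_optensor_ketbra_right)
qed (use assms in auto)

definition classical_XYA :: "nat \<Rightarrow> nat \<Rightarrow> nat \<Rightarrow> nat \<Rightarrow> (nat \<times> nat, nat \<times> nat) kern \<Rightarrow> bool" where
  "classical_XYA dX dY dA dB R \<longleftrightarrow>
     (\<forall>x<dX. \<forall>x2<dX. \<forall>y<dY. \<forall>y2<dY. \<forall>a<dA. \<forall>a2<dA. \<forall>b<dB. \<forall>b2<dB.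
        (x \<noteq> x2 \<or> y \<noteq> y2 \<or> a \<noteq> a2) \<longrightarrow> R (x,y) (x2,y2) (a,b) (a2,b2) = 0)"

lemma resource_classical_XYA:
  assumes "is_resource dX TC dY tY dA TC dB tB R" "tY = TC \<or> dY = 1"
  shows "classical_XYA dX dY dA dB R"
  unfolding classical_XYA_def
proof (intro allI impI)
  fix x x2 y y2 a a2 b b2
  assume idx: "x < dX" "x2 < dX" "y < dY" "y2 < dY" "a < dA" "a2 < dA" "b < dB" "b2 < dB"
    and "x \<noteq> x2 \<or> y \<noteq> y2 \<or> a \<noteq> a2"
  then consider "x \<noteq> x2" | "x = x2" "y \<noteq> y2" | "x = x2" "y = y2" "a \<noteq> a2" by blast
  then show "R (x,y) (x2,y2) (a,b) (a2,b2) = 0"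
  proof cases
    case 1
    then show ?thesis using resource_classical_X[OF assms(1)] idx by simp
  next
    case 2
    then have "tY = TC" using assms(2) idx by auto
    then show ?thesis using resource_classical_Y[of dX TC dY dA TC dB tB R] assms(1) 2 idx by simp
  next
    case 3
    then show ?thesis using resource_classical_A[OF assms(1)] idx by simp
  qed
qed

lemma resource_classical_XA_offdiag:
  assumes "is_resource dX TC 1 TI dA TC dB tB R" "x < dX" "x' < dX" "a < dA" "a' < dA" "b < dB" "b' < dB"
    and "\<not> (x = x' \<and> a = a')"
  shows "R (x,0) (x',0) (a,b) (a',b') = 0"
  using resource_classical_X[OF assms(1-3)] resource_classical_A[OF assms(1,2)] assms(4-8)
  by (cases "x = x'") auto

section \<open>Factorisation of the supermap\<close>

text \<open>One party's share of a branch of the supermap when the resource was used with input x and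
  returned the (unnormalised) output \<rho>: the pre-processing P maps x' to x together with a memory
  value k, and the post-processing E acts on the resource output and the memory.\<close>

definition wiring :: "nat \<Rightarrow> nat \<Rightarrow> (nat, nat \<times> nat) kern \<Rightarrow> (nat \<times> nat, nat) kern \<Rightarrow>
    nat \<Rightarrow> nat op \<Rightarrow> (nat, nat) kern" where
  "wiring d m P E x \<rho> = (\<lambda>x' x'' a' a''. \<Sum>a<d. \<Sum>a2<d. \<Sum>k<m. \<Sum>k2<m.
      P x' x'' (x,k) (x,k2) * \<rho> a a2 * E (a,k) (a2,k2) a' a'')"

lemma wiring_ketbra:
  assumes "a < d"
  shows "wiring d m P E x (ketbra a a) x' x'' a' a'' =
    (\<Sum>k<m. \<Sum>k2<m. P x' x'' (x,k) (x,k2) * E (a,k) (a,k2) a' a'')"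
proof -
  have "wiring d m P E x (ketbra a a) x' x'' a' a'' = (\<Sum>a1<d. \<Sum>a2<d. if a1 = a \<and> a2 = a
      then (\<Sum>k<m. \<Sum>k2<m. P x' x'' (x,k) (x,k2) * E (a1,k) (a2,k2) a' a'') else 0)"
    unfolding wiring_def ketbra_def by (intro sum.cong refl) auto
  also have "\<dots> = (\<Sum>k<m. \<Sum>k2<m. P x' x'' (x,k) (x,k2) * E (a,k) (a,k2) a' a'')"
    by (rule sum_sum_delta) (use assms in auto)
  finally show ?thesis .
qed

lemma wiring_diagonal:
  assumes "\<And>b b2. b < d \<Longrightarrow> b2 < d \<Longrightarrow> b \<noteq> b2 \<Longrightarrow> \<rho> b b2 = 0"
  shows "wiring d m P E y \<rho> y' y'' b' b'' = (\<Sum>b<d. \<rho> b b * wiring d m P E y (ketbra b b) y' y'' b' b'')"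
proof -
  have "wiring d m P E y \<rho> y' y'' b' b'' =
      (\<Sum>b<d. \<Sum>b2<d. if b2 = b then (\<Sum>k<m. \<Sum>k2<m. P y' y'' (y,k) (y,k2) * \<rho> b b * E (b,k) (b,k2) b' b'') else 0)"
    unfolding wiring_def using assms by (intro sum.cong refl) auto
  also have "\<dots> = (\<Sum>b<d. \<rho> b b * wiring d m P E y (ketbra b b) y' y'' b' b'')"
    by (intro sum.cong refl) (simp add: wiring_ketbra sum_distrib_left algebra_simps)
  finally show ?thesis .
qed

lemma wiring_psd:
  assumes P: "is_CP {..<dX'} ({..<dX} \<times> {..<m}) P" and E: "is_CP ({..<d} \<times> {..<m}) {..<d'} E"
    and "x' < dX'" "x < dX" "psd {..<d} \<rho>"
  shows "psd {..<d'} (wiring d m P E x \<rho> x' x')"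
proof -
  let ?\<sigma> = "\<lambda>k k2. P x' x' (x,k) (x,k2)"
  have "psd ({..<dX} \<times> {..<m}) (P x' x')"
    by (rule psd_block_of_CP[OF P]) (use assms in auto)
  then have "psd {..<m} ?\<sigma>"
    by (rule psd_slice_fst[rotated]) (use assms in auto)
  then have "psd ({..<d} \<times> {..<m}) (optensor \<rho> ?\<sigma>)"
    using psd_optensor[OF _ _ assms(5)] by blast
  then have "psd {..<d'} (kapply E ({..<d} \<times> {..<m}) (optensor \<rho> ?\<sigma>))"
    by (rule psd_kapply_of_CP[OF E, rotated 2]) auto
  moreover have "kapply E ({..<d} \<times> {..<m}) (optensor \<rho> ?\<sigma>) a' a'' = wiring d m P E x \<rho> x' x' a' a''"
    for a' a''
    unfolding kapply_def wiring_def optensor_def sum.cartesian_product'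
    by (rule sum.cong[OF refl], rule trans[OF sum.swap]) (auto simp: algebra_simps intro!: sum.cong)
  ultimately show ?thesis by (rule psd_cong)
qed

lemma wiring_diag_nonneg:
  assumes "is_CP {..<dX'} ({..<dX} \<times> {..<m}) P" "is_CP ({..<d} \<times> {..<m}) {..<d'} E"
    and "x' < dX'" "x < dX" "psd {..<d} \<rho>" "a' < d'"
  shows "0 \<le> wiring d m P E x \<rho> x' x' a' a'"
  using psd_diag_nonneg[OF _ wiring_psd[OF assms(1-5)]] assms(6) by simp

lemma wiring_trace:
  assumes "is_CPTP ({..<d} \<times> {..<m}) {..<d'} E"
  shows "(\<Sum>a'<d'. wiring d m P E x \<rho> x' x' a' a') = trace {..<d} \<rho> * (\<Sum>k<m. P x' x' (x,k) (x,k))"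
proof -
  have "(\<Sum>a'<d'. wiring d m P E x \<rho> x' x' a' a') = (\<Sum>a<d. \<Sum>a2<d. \<Sum>k<m. \<Sum>k2<m.
      P x' x' (x,k) (x,k2) * \<rho> a a2 * (\<Sum>a'<d'. E (a,k) (a2,k2) a' a'))"
    unfolding wiring_def sum_distrib_left by (simp add: sum.swap[of _ "{..<d'}"])
  also have "\<dots> = (\<Sum>a<d. \<Sum>a2<d. \<Sum>k<m. \<Sum>k2<m.
      if a2 = a \<and> k2 = k then P x' x' (x,k) (x,k) * \<rho> a a else 0)"
    by (intro sum.cong refl) (auto simp: CPTP_trace_block[OF assms])
  also have "\<dots> = (\<Sum>a<d. \<Sum>k<m. P x' x' (x,k) (x,k) * \<rho> a a)"
    by (rule sum.cong[OF refl], subst sum.swap, intro sum.cong refl sum_sum_delta) auto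
  also have "\<dots> = trace {..<d} \<rho> * (\<Sum>k<m. P x' x' (x,k) (x,k))"
    unfolding trace_def sum_product by (simp add: mult.commute)
  finally show ?thesis .
qed

lemma wiring_ketbra_trace:
  assumes "is_CPTP ({..<d} \<times> {..<m}) {..<d'} E" "a < d"
  shows "(\<Sum>a'<d'. wiring d m P E x (ketbra a a) x' x' a' a') = (\<Sum>k<m. P x' x' (x,k) (x,k))"
  using wiring_trace[OF assms(1)] trace_ketbra[of "{..<d}" a a] assms(2) by simp

lemma wiring_mixture_nonneg:
  assumes res: "is_resource dX tX dY tY dA tA dB tB R"
    and "is_CPTP {..<dX'} ({..<dX} \<times> {..<m}) P" "is_CPTP ({..<dA} \<times> {..<m}) {..<dA'} E"
    and "y < dY" "b < dB" "x' < dX'" "a' < dA'"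
  shows "0 \<le> (\<Sum>x<dX. \<Sum>a<dA. R (x,y) (x,y) (a,b) (a,b) * wiring dA m P E x (ketbra a a) x' x' a' a')"
proof (intro sum_nonneg mult_nonneg_nonneg)
  fix x a assume "x \<in> {..<dX}" "a \<in> {..<dA}"
  then show "0 \<le> R (x,y) (x,y) (a,b) (a,b)" "0 \<le> wiring dA m P E x (ketbra a a) x' x' a' a'"
    using assms by (auto intro: resource_diag_nonneg[OF res] wiring_diag_nonneg psd_ketbra
        simp: is_CPTP_def)
qed

text \<open>This is where the no-signalling of the resource enters.\<close>

lemma wiring_mixture_marginal:
  assumes res: "is_resource dX tX dY tY dA tA dB tB R"
    and P: "is_CPTP {..<dX'} ({..<dX} \<times> {..<m}) P" and E: "is_CPTP ({..<dA} \<times> {..<m}) {..<dA'} E"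
    and "y < dY" "b < dB" "x' < dX'"
  shows "(\<Sum>a'<dA'. \<Sum>x<dX. \<Sum>a<dA. R (x,y) (x,y) (a,b) (a,b) * wiring dA m P E x (ketbra a a) x' x' a' a')
    = (\<Sum>a<dA. R (0,y) (0,y) (a,b) (a,b))"
proof (rule mixture_row_sum[where c = "\<lambda>x. \<Sum>k<m. P x' x' (x,k) (x,k)"])
  show "(\<Sum>a<dA. R (x,y) (x,y) (a,b) (a,b)) = (\<Sum>a<dA. R (0,y) (0,y) (a,b) (a,b))" if "x < dX" for x
    using resource_no_signalling[OF res that _ assms(4,5)] is_resource_dims[OF res] by simp
  show "(\<Sum>a'<dA'. wiring dA m P E x (ketbra a a) x' x' a' a') = (\<Sum>k<m. P x' x' (x,k) (x,k))"
    if "a < dA" for x a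
    by (rule wiring_ketbra_trace[OF E that])
  show "(\<Sum>x<dX. \<Sum>k<m. P x' x' (x,k) (x,k)) = 1"
    by (rule CPTP_trace_block_product[OF P assms(6)])
qed

lemma supermap_branch_expand:
  "supermap_branch dX dY dA dB mA mB PA PB EA EB R (x',y') (x'',y'') (a',b') (a'',b'') =
    (\<Sum>a<dA. \<Sum>m<mA. \<Sum>b<dB. \<Sum>n<mB. \<Sum>a2<dA. \<Sum>m2<mA. \<Sum>b2<dB. \<Sum>n2<mB.
      (\<Sum>x<dX. \<Sum>y<dY. \<Sum>x2<dX. \<Sum>y2<dY.
         PA x' x'' (x,m) (x2,m2) * PB y' y'' (y,n) (y2,n2) * R (x,y) (x2,y2) (a,b) (a2,b2)) *
      (EA (a,m) (a2,m2) a' a'' * EB (b,n) (b2,n2) b' b''))"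
proof -
  let ?X = "{..<dX}" and ?Y = "{..<dY}" and ?A = "{..<dA}" and ?B = "{..<dB}"
    and ?MA = "{..<mA}" and ?MB = "{..<mB}"
  let ?\<sigma>1 = "\<lambda>((x,m),(y,n)). ((x,y),(m,n)) :: (nat \<times> nat) \<times> (nat \<times> nat)"
  let ?\<sigma>2 = "\<lambda>((a,b),(m,n)). ((a,m),(b,n)) :: (nat \<times> nat) \<times> (nat \<times> nat)"
  define Kenc where "Kenc = kcomp (ktensor PA PB) ((?X \<times> ?MA) \<times> (?Y \<times> ?MB)) (kperm ?\<sigma>1)"
  define Kres where "Kres = kcomp Kenc ((?X \<times> ?Y) \<times> (?MA \<times> ?MB)) (ktensor R kid)"
  define Kgrp where "Kgrp = kcomp Kres ((?A \<times> ?B) \<times> (?MA \<times> ?MB)) (kperm ?\<sigma>2)"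
  have Kenc: "Kenc (x',y') (x'',y'') ((x,y),(m,n)) ((x2,y2),(m2,n2)) =
      PA x' x'' (x,m) (x2,m2) * PB y' y'' (y,n) (y2,n2)"
    if "x < dX" "m < mA" "y < dY" "n < mB" "x2 < dX" "m2 < mA" "y2 < dY" "n2 < mB"
    for x y m n x2 y2 m2 n2
  proof -
    have "Kenc (x',y') (x'',y'') (?\<sigma>1 ((x,m),(y,n))) (?\<sigma>1 ((x2,m2),(y2,n2))) =
        ktensor PA PB (x',y') (x'',y'') ((x,m),(y,n)) ((x2,m2),(y2,n2))"
      unfolding Kenc_def by (rule kcomp_kperm) (use that in \<open>auto simp: inj_on_def\<close>)
    then show ?thesis by (simp add: ktensor_def)
  qed
  have Kres: "Kres (x',y') (x'',y'') ((a,b),(m,n)) ((a2,b2),(m2,n2)) =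
      (\<Sum>x<dX. \<Sum>y<dY. \<Sum>x2<dX. \<Sum>y2<dY.
         PA x' x'' (x,m) (x2,m2) * PB y' y'' (y,n) (y2,n2) * R (x,y) (x2,y2) (a,b) (a2,b2))"
    if "m < mA" "n < mB" "m2 < mA" "n2 < mB" for a b m n a2 b2 m2 n2
    unfolding Kres_def using that
    by (subst kcomp_ktensor_kid) (auto simp: sum.cartesian_product' Kenc intro!: sum.cong)
  have Kgrp: "Kgrp (x',y') (x'',y'') ((a,m),(b,n)) ((a2,m2),(b2,n2)) =
      Kres (x',y') (x'',y'') ((a,b),(m,n)) ((a2,b2),(m2,n2))"
    if "a < dA" "b < dB" "m < mA" "n < mB" "a2 < dA" "b2 < dB" "m2 < mA" "n2 < mB"
    for a b m n a2 b2 m2 n2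
  proof -
    have "Kgrp (x',y') (x'',y'') (?\<sigma>2 ((a,b),(m,n))) (?\<sigma>2 ((a2,b2),(m2,n2))) =
        Kres (x',y') (x'',y'') ((a,b),(m,n)) ((a2,b2),(m2,n2))"
      unfolding Kgrp_def by (rule kcomp_kperm) (use that in \<open>auto simp: inj_on_def\<close>)
    then show ?thesis by simp
  qed
  have branch: "supermap_branch dX dY dA dB mA mB PA PB EA EB R = kcomp Kgrp ((?A \<times> ?MA) \<times> (?B \<times> ?MB)) (ktensor EA EB)"
    unfolding supermap_branch_def Let_def Kenc_def Kres_def Kgrp_def ..
  show ?thesis
    unfolding branch kcomp_def sum.cartesian_product' by (intro sum.cong refl) (simp add: Kgrp Kres ktensor_def)
qed

lemma supermap_branch_classical:
  assumes "classical_XYA dX dY dA dB R"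
  shows "supermap_branch dX dY dA dB mA mB PA PB EA EB R (x',y') (x'',y'') (a',b') (a'',b'') =
    (\<Sum>a<dA. \<Sum>m<mA. \<Sum>b<dB. \<Sum>n<mB. \<Sum>m2<mA. \<Sum>b2<dB. \<Sum>n2<mB.
      (\<Sum>x<dX. \<Sum>y<dY. PA x' x'' (x,m) (x,m2) * PB y' y'' (y,n) (y,n2) * R (x,y) (x,y) (a,b) (a,b2)) *
      (EA (a,m) (a,m2) a' a'' * EB (b,n) (b2,n2) b' b''))"
proof -
  let ?G = "\<lambda>a m b n m2 b2 n2. \<Sum>x<dX. \<Sum>y<dY.
      PA x' x'' (x,m) (x,m2) * PB y' y'' (y,n) (y,n2) * R (x,y) (x,y) (a,b) (a,b2)"
  have diag: "(\<Sum>x<dX. \<Sum>y<dY. \<Sum>x2<dX. \<Sum>y2<dY.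
        PA x' x'' (x,m) (x2,m2) * PB y' y'' (y,n) (y2,n2) * R (x,y) (x2,y2) (a,b) (a2,b2))
      = (if a2 = a then ?G a m b n m2 b2 n2 else 0)"
    if "a < dA" "b < dB" "a2 < dA" "b2 < dB" for a m b n a2 m2 b2 n2
  proof -
    have "(\<Sum>x<dX. \<Sum>y<dY. \<Sum>x2<dX. \<Sum>y2<dY.
        PA x' x'' (x,m) (x2,m2) * PB y' y'' (y,n) (y2,n2) * R (x,y) (x2,y2) (a,b) (a2,b2)) =
      (\<Sum>x<dX. \<Sum>y<dY. \<Sum>x2<dX. \<Sum>y2<dY. if x2 = x \<and> y2 = y then (if a2 = a then
        PA x' x'' (x,m) (x,m2) * PB y' y'' (y,n) (y,n2) * R (x,y) (x,y) (a,b) (a,b2) else 0) else 0)"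
      using assms that unfolding classical_XYA_def by (intro sum.cong refl) auto
    also have "\<dots> = (\<Sum>x<dX. \<Sum>y<dY. if a2 = a then
        PA x' x'' (x,m) (x,m2) * PB y' y'' (y,n) (y,n2) * R (x,y) (x,y) (a,b) (a,b2) else 0)"
      by (intro sum.cong refl sum_sum_delta) auto
    finally show ?thesis by simp
  qed
  have "supermap_branch dX dY dA dB mA mB PA PB EA EB R (x',y') (x'',y'') (a',b') (a'',b'') =
      (\<Sum>a<dA. \<Sum>m<mA. \<Sum>b<dB. \<Sum>n<mB. \<Sum>a2<dA. \<Sum>m2<mA. \<Sum>b2<dB. \<Sum>n2<mB.
        if a2 = a then ?G a m b n m2 b2 n2 * (EA (a,m) (a,m2) a' a'' * EB (b,n) (b2,n2) b' b'') else 0)"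
    unfolding supermap_branch_expand by (intro sum.cong refl) (simp add: diag)
  also have "\<dots> = (\<Sum>a<dA. \<Sum>m<mA. \<Sum>b<dB. \<Sum>n<mB. \<Sum>m2<mA. \<Sum>b2<dB. \<Sum>n2<mB.
      ?G a m b n m2 b2 n2 * (EA (a,m) (a,m2) a' a'' * EB (b,n) (b2,n2) b' b''))"
    by (intro sum.cong[OF refl]) (simp add: sum_if_left sum.delta)
  finally show ?thesis .
qed

lemma supermap_branch_factorizes:
  assumes "classical_XYA dX dY dA dB R"
  shows "supermap_branch dX dY dA dB mA mB PA PB EA EB R (x',y') (x'',y'') (a',b') (a'',b'') =
    (\<Sum>x<dX. \<Sum>y<dY. \<Sum>a<dA. wiring dA mA PA EA x (ketbra a a) x' x'' a' a'' *
        wiring dB mB PB EB y (\<lambda>b b2. R (x,y) (x,y) (a,b) (a,b2)) y' y'' b' b'')"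
proof -
  let ?X = "{..<dX}" and ?Y = "{..<dY}" and ?A = "{..<dA}" and ?B = "{..<dB}"
    and ?MA = "{..<mA}" and ?MB = "{..<mB}"
  let ?F = "\<lambda>(a,m,b,n,m2,b2,n2,x,y). PA x' x'' (x,m) (x,m2) * PB y' y'' (y,n) (y,n2) *
      R (x,y) (x,y) (a,b) (a,b2) * (EA (a,m) (a,m2) a' a'' * EB (b,n) (b2,n2) b' b'')"
  have "supermap_branch dX dY dA dB mA mB PA PB EA EB R (x',y') (x'',y'') (a',b') (a'',b'') =
      sum ?F (?A \<times> ?MA \<times> ?B \<times> ?MB \<times> ?MA \<times> ?B \<times> ?MB \<times> ?X \<times> ?Y)"
    unfolding supermap_branch_classical[OF assms] sum_distrib_right
    by (simp only: sum.cartesian_product split_def)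
  also have "\<dots> = (\<Sum>(x,y,a,b,b2,n,n2,m,m2)\<in>?X \<times> ?Y \<times> ?A \<times> ?B \<times> ?B \<times> ?MB \<times> ?MB \<times> ?MA \<times> ?MA.
      (PA x' x'' (x,m) (x,m2) * EA (a,m) (a,m2) a' a'') *
      (PB y' y'' (y,n) (y,n2) * R (x,y) (x,y) (a,b) (a,b2) * EB (b,n) (b2,n2) b' b''))"
    by (rule sum.reindex_bij_witness[where i = "\<lambda>(x,y,a,b,b2,n,n2,m,m2). (a,m,b,n,m2,b2,n2,x,y)"
          and j = "\<lambda>(a,m,b,n,m2,b2,n2,x,y). (x,y,a,b,b2,n,n2,m,m2)"]) auto
  also have "\<dots> = (\<Sum>x<dX. \<Sum>y<dY. \<Sum>a<dA. (\<Sum>m<mA. \<Sum>m2<mA. PA x' x'' (x,m) (x,m2) * EA (a,m) (a,m2) a' a'') *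
      (\<Sum>b<dB. \<Sum>b2<dB. \<Sum>n<mB. \<Sum>n2<mB.
        PB y' y'' (y,n) (y,n2) * R (x,y) (x,y) (a,b) (a,b2) * EB (b,n) (b2,n2) b' b''))"
    unfolding sum_distrib_left sum_distrib_right by (simp only: sum.cartesian_product split_def)
  also have "\<dots> = (\<Sum>x<dX. \<Sum>y<dY. \<Sum>a<dA. wiring dA mA PA EA x (ketbra a a) x' x'' a' a'' *
        wiring dB mB PB EB y (\<lambda>b b2. R (x,y) (x,y) (a,b) (a,b2)) y' y'' b' b'')"
    by (intro sum.cong refl) (simp add: wiring_ketbra, simp add: wiring_def)
  finally show ?thesis .
qed

lemma supermap_factorizes:
  assumes "classical_XYA dX dY dA dB R"
  shows "supermap dX dY dA dB \<Lambda> p mA mB PA PB EA EB R (x',y') (x'',y'') (a',b') (a'',b'') =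
    (\<Sum>l\<in>\<Lambda>. \<Sum>x<dX. \<Sum>y<dY. \<Sum>a<dA. complex_of_real (p l) *
      (wiring dA (mA l) (PA l) (EA l) x (ketbra a a) x' x'' a' a'' *
       wiring dB (mB l) (PB l) (EB l) y (\<lambda>b b2. R (x,y) (x,y) (a,b) (a,b2)) y' y'' b' b''))"
  unfolding supermap_def supermap_branch_factorizes[OF assms] sum_distrib_left ..

lemma supermap_factorizes_classical_B:
  assumes "classical_XYA dX dY dA dB R"
    and "\<forall>x<dX. \<forall>y<dY. \<forall>a<dA. \<forall>b<dB. \<forall>b2<dB. b \<noteq> b2 \<longrightarrow> R (x,y) (x,y) (a,b) (a,b2) = 0"
  shows "supermap dX dY dA dB \<Lambda> p mA mB PA PB EA EB R (x',y') (x'',y'') (a',b') (a'',b'') =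
    (\<Sum>l\<in>\<Lambda>. \<Sum>y<dY. \<Sum>b<dB. complex_of_real (p l) *
      ((\<Sum>x<dX. \<Sum>a<dA. R (x,y) (x,y) (a,b) (a,b) * wiring dA (mA l) (PA l) (EA l) x (ketbra a a) x' x'' a' a'') *
       wiring dB (mB l) (PB l) (EB l) y (ketbra b b) y' y'' b' b''))"
proof -
  let ?WA = "\<lambda>l x a. wiring dA (mA l) (PA l) (EA l) x (ketbra a a) x' x'' a' a''"
  let ?WB = "\<lambda>l y b. wiring dB (mB l) (PB l) (EB l) y (ketbra b b) y' y'' b' b''"
  have diagonal: "wiring dB (mB l) (PB l) (EB l) y (\<lambda>b b2. R (x,y) (x,y) (a,b) (a,b2)) y' y'' b' b'' =
      (\<Sum>b<dB. R (x,y) (x,y) (a,b) (a,b) * ?WB l y b)" if "x < dX" "y < dY" "a < dA" for l x y a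
    by (rule wiring_diagonal) (use assms(2) that in auto)
  have "supermap dX dY dA dB \<Lambda> p mA mB PA PB EA EB R (x',y') (x'',y'') (a',b') (a'',b'') =
      (\<Sum>l\<in>\<Lambda>. \<Sum>x<dX. \<Sum>a<dA. \<Sum>y<dY. \<Sum>b<dB.
        complex_of_real (p l) * (R (x,y) (x,y) (a,b) (a,b) * ?WA l x a * ?WB l y b))"
    unfolding supermap_factorizes[OF assms(1)]
    by (intro sum.cong[OF refl], subst sum.swap, intro sum.cong[OF refl])
      (simp add: diagonal sum_distrib_left algebra_simps)
  also have "\<dots> = (\<Sum>l\<in>\<Lambda>. \<Sum>y<dY. \<Sum>b<dB. \<Sum>x<dX. \<Sum>a<dA.
        complex_of_real (p l) * (R (x,y) (x,y) (a,b) (a,b) * ?WA l x a * ?WB l y b))"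
    by (rule sum.cong[OF refl], rule sum_swap_pairs)
  also have "\<dots> = (\<Sum>l\<in>\<Lambda>. \<Sum>y<dY. \<Sum>b<dB. complex_of_real (p l) *
      ((\<Sum>x<dX. \<Sum>a<dA. R (x,y) (x,y) (a,b) (a,b) * ?WA l x a) * ?WB l y b))"
    by (simp add: sum_distrib_left sum_distrib_right mult.assoc)
  finally show ?thesis .
qed

section \<open>Local channels and LOSR-free resources\<close>

definition prepare :: "'j op \<Rightarrow> (nat, 'j) kern" where
  "prepare \<omega> = (\<lambda>_ _ j j'. \<omega> j j')"

definition classical_channel :: "(nat \<Rightarrow> nat \<Rightarrow> real) \<Rightarrow> (nat, nat) kern" where
  "classical_channel q = (\<lambda>x x' a a'. if x = x' \<and> a = a' then complex_of_real (q x a) else 0)"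

lemma prepare_channel:
  assumes "valid_sys d TQ" "density {..<d} \<omega>"
  shows "channel 1 TI d TQ (prepare \<omega>)"
  unfolding channel_def is_CPTP_def is_CP_def
proof (intro conjI allI impI)
  show "valid_sys 1 TI" "valid_sys d TQ" using assms(1) by (auto simp: valid_sys_def)
  fix k :: nat and \<rho> :: "(nat \<times> nat) op"
  assume "psd ({..<1} \<times> {..<k}) \<rho>"
  then have "psd {..<k} (\<lambda>l l'. \<rho> (0,l) (0,l'))"
    by (rule psd_slice_fst[rotated]) auto
  then have "psd ({..<d} \<times> {..<k}) (optensor \<omega> (\<lambda>l l'. \<rho> (0,l) (0,l')))"
    using psd_optensor[of "{..<d}" "{..<k}" \<omega>] assms(2) unfolding density_def by blast
  then show "psd ({..<d} \<times> {..<k}) (kapply (ktensor (prepare \<omega>) kid) ({..<1} \<times> {..<k}) \<rho>)"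
    by (rule psd_cong) (auto simp: kapply_ktensor_kid optensor_def prepare_def)
next
  fix \<rho>
  show "trace {..<d} (kapply (prepare \<omega>) {..<1} \<rho>) = trace {..<1} \<rho>"
    using assms(2) unfolding density_def trace_def kapply_def prepare_def
    by (simp add: sum_distrib_right[symmetric])
qed simp_all

lemma classical_channel_apply_ktensor_kid:
  fixes k m m' :: nat
  assumes "finite X" "finite A" "a \<in> A" "a' \<in> A" "m < k" "m' < k"
  shows "kapply (ktensor (classical_channel q) kid) (X \<times> {..<k}) \<rho> (a,m) (a',m') =
    (\<Sum>x\<in>X. \<Sum>a0\<in>A. complex_of_real (q x a0) * optensor (ketbra a0 a0) (\<lambda>l l'. \<rho> (x,l) (x,l')) (a,m) (a',m'))"
proof -
  have "kapply (ktensor (classical_channel q) kid) (X \<times> {..<k}) \<rho> (a,m) (a',m') =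
      (\<Sum>x\<in>X. \<Sum>x'\<in>X. if x' = x then (if a = a' then complex_of_real (q x a) * \<rho> (x,m) (x,m') else 0) else 0)"
    unfolding kapply_ktensor_kid[OF assms(1,5,6)] classical_channel_def by (intro sum.cong refl) auto
  also have "\<dots> = (\<Sum>x\<in>X. \<Sum>a0\<in>A. complex_of_real (q x a0) * optensor (ketbra a0 a0) (\<lambda>l l'. \<rho> (x,l) (x,l')) (a,m) (a',m'))"
  proof (rule sum.cong[OF refl])
    fix x assume "x \<in> X"
    show "(\<Sum>x'\<in>X. if x' = x then (if a = a' then complex_of_real (q x a) * \<rho> (x,m) (x,m') else 0) else 0) =
        (\<Sum>a0\<in>A. complex_of_real (q x a0) * optensor (ketbra a0 a0) (\<lambda>l l'. \<rho> (x,l) (x,l')) (a,m) (a',m'))"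
      using assms(1-4) \<open>x \<in> X\<close> by (cases "a = a'") (auto simp: optensor_def ketbra_def sum.delta' if_distrib[of "\<lambda>r. r * _"]
          if_distrib[of "(*) _"] cong: if_cong intro!: sum.neutral)
  qed
  finally show ?thesis .
qed

lemma classical_channel_channel:
  assumes "valid_sys dX TC" "valid_sys dA TC"
    and "\<And>x a. x < dX \<Longrightarrow> a < dA \<Longrightarrow> 0 \<le> q x a" "\<And>x. x < dX \<Longrightarrow> (\<Sum>a<dA. q x a) = 1"
  shows "channel dX TC dA TC (classical_channel q)"
  unfolding channel_def is_CPTP_def is_CP_def
proof (intro conjI allI impI ballI)
  show "valid_sys dX TC" "valid_sys dA TC" by fact+
  fix k :: nat and \<rho>
  assume \<rho>: "psd ({..<dX} \<times> {..<k}) \<rho>"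
  have "psd ({..<dA} \<times> {..<k}) (\<lambda>u u'. \<Sum>x<dX. \<Sum>a0<dA. complex_of_real (q x a0) *
      optensor (ketbra a0 a0) (\<lambda>l l'. \<rho> (x,l) (x,l')) u u')"
  proof (intro psd_sum psd_scale)
    fix x a0 assume "x \<in> {..<dX}" "a0 \<in> {..<dA}"
    then show "0 \<le> complex_of_real (q x a0)" using assms(3) by (simp add: less_eq_complex_def)
    have "psd {..<k} (\<lambda>l l'. \<rho> (x,l) (x,l'))"
      using \<rho> \<open>x \<in> {..<dX}\<close> by (intro psd_slice_fst[rotated]) auto
    then show "psd ({..<dA} \<times> {..<k}) (optensor (ketbra a0 a0) (\<lambda>l l'. \<rho> (x,l) (x,l')))"
      using \<open>a0 \<in> {..<dA}\<close> by (intro psd_optensor psd_ketbra) auto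
  qed
  then show "psd ({..<dA} \<times> {..<k}) (kapply (ktensor (classical_channel q) kid) ({..<dX} \<times> {..<k}) \<rho>)"
    by (rule psd_cong) (auto simp: classical_channel_apply_ktensor_kid[where A = "{..<dA}"])
next
  fix \<rho>
  have "trace {..<dA} (kapply (classical_channel q) {..<dX} \<rho>) = (\<Sum>x<dX. complex_of_real (\<Sum>a<dA. q x a) * \<rho> x x)"
    unfolding trace_def kapply_def classical_channel_def
    by (subst sum.swap) (simp add: if_distrib[of "\<lambda>r. r * _"] sum.delta sum_distrib_right cong: if_cong)
  then show "trace {..<dA} (kapply (classical_channel q) {..<dX} \<rho>) = trace {..<dX} \<rho>"
    using assms(4) by (simp add: trace_def)
next
  fix \<rho> and a a' :: nat assume "a \<noteq> a'"
  then show "kapply (classical_channel q) {..<dX} \<rho> a a' = 0"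
    unfolding kapply_def classical_channel_def by simp
next
  fix i j assume "i \<in> {..<dX}" "j \<in> {..<dX}" "i \<noteq> j"
  then show "op_eq_on {..<dA} (kapply (classical_channel q) {..<dX} (ketbra i j)) (\<lambda>_ _. 0)"
    by (simp add: kapply_ketbra op_eq_on_def classical_channel_def)
qed

lemma channel_trace_block:
  assumes "channel dX tX dA tA K" "x < dX"
  shows "(\<Sum>a<dA. K x x a a) = 1"
  using CPTP_trace_block[of "{..<dX}" "{..<dA}" K x x] assms unfolding channel_def by simp

text \<open>A positive operator of trace zero vanishes, so the fallback value never matters.\<close>

definition trace_normalize :: "nat set \<Rightarrow> nat op \<Rightarrow> nat op" where
  "trace_normalize T \<omega> = (if trace T \<omega> = 0 then ketbra 0 0 else (\<lambda>j j'. \<omega> j j' / trace T \<omega>))"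

lemma density_trace_normalize:
  assumes "finite T" "0 \<in> T" "psd T \<omega>"
  shows "density T (trace_normalize T \<omega>)"
proof (cases "trace T \<omega> = 0")
  case True
  then show ?thesis unfolding trace_normalize_def using density_ketbra[OF assms(1,2)] by simp
next
  case False
  have "psd T (\<lambda>j j'. inverse (trace T \<omega>) * \<omega> j j')"
    by (rule psd_scale[OF complex_inverse_nonneg[OF psd_trace_nonneg[OF assms(1,3)]] assms(3)])
  moreover have "trace T (trace_normalize T \<omega>) = 1"
    using False unfolding trace_normalize_def trace_def by (simp add: sum_divide_distrib[symmetric])
  ultimately show ?thesis
    using False unfolding density_def trace_normalize_def by (simp add: field_simps)
qed

lemma trace_normalize_scale:
  assumes "finite T" "psd T \<omega>" "j \<in> T" "j' \<in> T"
  shows "\<omega> j j' = complex_of_real (Re (trace T \<omega>)) * trace_normalize T \<omega> j j'"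
proof (cases "trace T \<omega> = 0")
  case True
  have "(\<Sum>t\<in>T. \<omega> t t) = 0" using True unfolding trace_def .
  then have "\<omega> j j = 0"
    using sum_nonneg_eq_0_iff[OF assms(1), of "\<lambda>t. \<omega> t t"] psd_diag_nonneg[OF assms(1,2)] assms(3)
    by simp
  then show ?thesis using True psd_diag_zero_imp_zero[OF assms] by simp
next
  case False
  moreover have "complex_of_real (Re (trace T \<omega>)) = trace T \<omega>"
    using psd_trace_nonneg[OF assms(1,2)] by (simp add: less_eq_complex_def complex_eq_iff)
  ultimately show ?thesis unfolding trace_normalize_def by simp
qed

text \<open>If the nonnegative row sums s vanish then so does G, and any distribution will do.\<close>

definition row_normalize :: "real \<Rightarrow> (nat \<Rightarrow> nat \<Rightarrow> real) \<Rightarrow> nat \<Rightarrow> nat \<Rightarrow> real" where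
  "row_normalize s G = (\<lambda>x a. if s = 0 then (if a = 0 then 1 else 0) else G x a / s)"

lemma row_normalize:
  fixes G :: "nat \<Rightarrow> nat \<Rightarrow> real"
  assumes "0 < dA" "\<And>x a. x < dX \<Longrightarrow> a < dA \<Longrightarrow> 0 \<le> G x a"
    and "\<And>x. x < dX \<Longrightarrow> (\<Sum>a<dA. G x a) = s" "x < dX"
  shows row_normalize_nonneg: "a < dA \<Longrightarrow> 0 \<le> row_normalize s G x a"
    and row_normalize_sum: "(\<Sum>a<dA. row_normalize s G x a) = 1"
    and row_normalize_scale: "a < dA \<Longrightarrow> G x a = s * row_normalize s G x a"
proof -
  have s: "s = (\<Sum>a<dA. G x a)" using assms(3,4) by simp
  have "0 \<le> s" unfolding s by (rule sum_nonneg) (use assms(2,4) in simp)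
  then show "a < dA \<Longrightarrow> 0 \<le> row_normalize s G x a"
    using assms(2,4) unfolding row_normalize_def by simp
  show "(\<Sum>a<dA. row_normalize s G x a) = 1"
  proof (cases "s = 0")
    case True
    then show ?thesis using assms(1) unfolding row_normalize_def by (simp add: sum.delta)
  next
    case False
    then show ?thesis unfolding row_normalize_def by (simp add: sum_divide_distrib[symmetric] s[symmetric])
  qed
  assume "a < dA"
  show "G x a = s * row_normalize s G x a"
  proof (cases "s = 0")
    case True
    then have "\<forall>a'\<in>{..<dA}. G x a' = 0"
      using sum_nonneg_eq_0_iff[of "{..<dA}" "G x"] assms(2,4) s by simp
    then show ?thesis using \<open>a < dA\<close> True by simp
  next
    case False
    then show ?thesis unfolding row_normalize_def by simp
  qed
qed

lemma LOSR_freeI: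
  fixes T :: "'t::countable set" and w :: "'t \<Rightarrow> real" and RA RB :: "'t \<Rightarrow> (nat,nat) kern"
  assumes res: "is_resource dX tX dY tY dA tA dB tB R"
    and T: "finite T" "\<And>t. t \<in> T \<Longrightarrow> 0 \<le> w t"
    and ch: "\<And>t. t \<in> T \<Longrightarrow> channel dX tX dA tA (RA t)" "\<And>t. t \<in> T \<Longrightarrow> channel dY tY dB tB (RB t)"
    and eq: "\<And>x y x' y' a b a' b'. x < dX \<Longrightarrow> y < dY \<Longrightarrow> x' < dX \<Longrightarrow> y' < dY \<Longrightarrow>
      a < dA \<Longrightarrow> b < dB \<Longrightarrow> a' < dA \<Longrightarrow> b' < dB \<Longrightarrow>
      R (x,y) (x',y') (a,b) (a',b') = (\<Sum>t\<in>T. complex_of_real (w t) * (RA t x x' a a' * RB t y y' b b'))"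
  shows "LOSR_free dX tX dY tY dA tA dB tB R"
proof -
  note dims = is_resource_dims[OF res]
  have "1 = (\<Sum>a<dA. \<Sum>b<dB. R (0,0) (0,0) (a,b) (a,b))"
    using resource_trace[OF res dims] by simp
  also have "\<dots> = (\<Sum>t\<in>T. \<Sum>a<dA. \<Sum>b<dB. complex_of_real (w t) * (RA t 0 0 a a * RB t 0 0 b b))"
    using dims by (simp add: eq sum.swap[of _ T])
  also have "\<dots> = (\<Sum>t\<in>T. complex_of_real (w t) * ((\<Sum>a<dA. RA t 0 0 a a) * (\<Sum>b<dB. RB t 0 0 b b)))"
    unfolding sum_product unfolding sum_distrib_left ..
  also have "\<dots> = (\<Sum>t\<in>T. complex_of_real (w t))"
    using channel_trace_block[OF ch(1) dims(1)] channel_trace_block[OF ch(2) dims(2)] by simp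
  finally have weights: "(\<Sum>t\<in>T. w t) = 1"
    by (metis of_real_eq_1_iff of_real_sum)
  have inj: "inj_on to_nat T" by (rule inj_on_subset[OF inj_to_nat]) simp
  let ?I = "to_nat ` T" and ?p = "\<lambda>i. w (from_nat i)"
    and ?RA = "\<lambda>i. RA (from_nat i)" and ?RB = "\<lambda>i. RB (from_nat i)"
  have "finite ?I" "\<forall>i\<in>?I. ?p i \<ge> 0" "(\<Sum>i\<in>?I. ?p i) = 1"
    "\<forall>i\<in>?I. channel dX tX dA tA (?RA i) \<and> channel dY tY dB tB (?RB i)"
    using T ch weights by (auto simp: sum.reindex[OF inj])
  moreover have "keq ({..<dX} \<times> {..<dY}) ({..<dA} \<times> {..<dB}) R
      (\<lambda>u u' v v'. \<Sum>i\<in>?I. complex_of_real (?p i) * ktensor (?RA i) (?RB i) u u' v v')"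
    unfolding keq_def by (auto simp: eq sum.reindex[OF inj] ktensor_def)
  ultimately show ?thesis
    unfolding LOSR_free_def
    by (intro conjI[OF res] exI[of _ ?I] exI[of _ ?p] exI[of _ ?RA] exI[of _ ?RB]) simp
qed

lemma LOSR_free_separable_state:
  fixes T :: "'t::countable set" and c :: "'t \<Rightarrow> real"
  assumes res: "is_resource 1 TI 1 TI dA TQ dB TQ R" and T: "finite T" "\<And>t. t \<in> T \<Longrightarrow> 0 \<le> c t"
    and \<omega>: "\<And>t. t \<in> T \<Longrightarrow> psd {..<dA} (\<omega>A t)" "\<And>t. t \<in> T \<Longrightarrow> psd {..<dB} (\<omega>B t)"
    and eq: "\<And>a a' b b'. a < dA \<Longrightarrow> a' < dA \<Longrightarrow> b < dB \<Longrightarrow> b' < dB \<Longrightarrow>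
      R (0,0) (0,0) (a,b) (a',b') = (\<Sum>t\<in>T. complex_of_real (c t) * (\<omega>A t a a' * \<omega>B t b b'))"
  shows "LOSR_free 1 TI 1 TI dA TQ dB TQ R"
proof -
  have sys: "valid_sys dA TQ" "valid_sys dB TQ" using res unfolding is_resource_def Let_def by auto
  then have zero: "0 \<in> {..<dA}" "0 \<in> {..<dB}" unfolding valid_sys_def by auto
  let ?tr = "\<lambda>d \<omega>. Re (trace {..<d} \<omega>)"
  show ?thesis
  proof (rule LOSR_freeI[OF res T(1), where w = "\<lambda>t. c t * ?tr dA (\<omega>A t) * ?tr dB (\<omega>B t)"
        and RA = "\<lambda>t. prepare (trace_normalize {..<dA} (\<omega>A t))"
        and RB = "\<lambda>t. prepare (trace_normalize {..<dB} (\<omega>B t))"])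
    fix t assume t: "t \<in> T"
    show "0 \<le> c t * ?tr dA (\<omega>A t) * ?tr dB (\<omega>B t)"
      using T(2)[OF t] psd_trace_nonneg[OF _ \<omega>(1)[OF t]] psd_trace_nonneg[OF _ \<omega>(2)[OF t]]
      by (simp add: less_eq_complex_def)
    show "channel 1 TI dA TQ (prepare (trace_normalize {..<dA} (\<omega>A t)))"
      "channel 1 TI dB TQ (prepare (trace_normalize {..<dB} (\<omega>B t)))"
      using prepare_channel sys density_trace_normalize[OF _ zero(1) \<omega>(1)[OF t]]
        density_trace_normalize[OF _ zero(2) \<omega>(2)[OF t]] by auto
  next
    fix x y x' y' a b a' b' :: nat
    assume "x < 1" "y < 1" "x' < 1" "y' < 1" "a < dA" "b < dB" "a' < dA" "b' < dB"
    then show "R (x,y) (x',y') (a,b) (a',b') = (\<Sum>t\<in>T. complex_of_real (c t * ?tr dA (\<omega>A t) * ?tr dB (\<omega>B t)) *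
        (prepare (trace_normalize {..<dA} (\<omega>A t)) x x' a a' * prepare (trace_normalize {..<dB} (\<omega>B t)) y y' b b'))"
      using trace_normalize_scale[OF _ \<omega>(1)] trace_normalize_scale[OF _ \<omega>(2)]
      by (simp add: eq prepare_def mult_ac cong: sum.cong)
  qed
qed

lemma LOSR_free_local_hidden_state:
  fixes T :: "'t::countable set" and G :: "'t \<Rightarrow> nat \<Rightarrow> nat \<Rightarrow> real"
  assumes res: "is_resource dX TC 1 TI dA TC dB TQ R" and T: "finite T"
    and G: "\<And>t x a. t \<in> T \<Longrightarrow> x < dX \<Longrightarrow> a < dA \<Longrightarrow> 0 \<le> G t x a"
      "\<And>t x. t \<in> T \<Longrightarrow> x < dX \<Longrightarrow> (\<Sum>a<dA. G t x a) = s t"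
    and \<omega>: "\<And>t. t \<in> T \<Longrightarrow> psd {..<dB} (\<omega> t)"
    and eq: "\<And>x a b b'. x < dX \<Longrightarrow> a < dA \<Longrightarrow> b < dB \<Longrightarrow> b' < dB \<Longrightarrow>
      R (x,0) (x,0) (a,b) (a,b') = (\<Sum>t\<in>T. complex_of_real (G t x a) * \<omega> t b b')"
  shows "LOSR_free dX TC 1 TI dA TC dB TQ R"
proof -
  have sys: "valid_sys dX TC" "valid_sys dA TC" "valid_sys dB TQ"
    using res unfolding is_resource_def Let_def by auto
  then have pos: "0 < dX" "0 < dA" "0 \<in> {..<dB}" unfolding valid_sys_def by auto
  let ?q = "\<lambda>t. row_normalize (s t) (G t)" and ?tr = "\<lambda>t. Re (trace {..<dB} (\<omega> t))"
  show ?thesis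
  proof (rule LOSR_freeI[OF res T, where w = "\<lambda>t. s t * ?tr t"
        and RA = "\<lambda>t. classical_channel (?q t)" and RB = "\<lambda>t. prepare (trace_normalize {..<dB} (\<omega> t))"])
    fix t assume t: "t \<in> T"
    have "0 \<le> s t" unfolding G(2)[OF t pos(1), symmetric] by (rule sum_nonneg) (use G(1) t pos in auto)
    then show "0 \<le> s t * ?tr t"
      using psd_trace_nonneg[OF _ \<omega>[OF t]] by (simp add: less_eq_complex_def)
    show "channel dX TC dA TC (classical_channel (?q t))"
      using row_normalize_nonneg[where G = "G t", OF pos(2) G(1)[OF t] G(2)[OF t]]
        row_normalize_sum[where G = "G t", OF pos(2) G(1)[OF t] G(2)[OF t]]
      by (intro classical_channel_channel sys) auto
    show "channel 1 TI dB TQ (prepare (trace_normalize {..<dB} (\<omega> t)))"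
      using prepare_channel sys density_trace_normalize[OF _ pos(3) \<omega>[OF t]] by auto
  next
    fix x y x' y' a b a' b' :: nat
    assume xy: "x < dX" "y < 1" "x' < dX" "y' < 1" and ab: "a < dA" "b < dB" "a' < dA" "b' < dB"
    show "R (x,y) (x',y') (a,b) (a',b') = (\<Sum>t\<in>T. complex_of_real (s t * ?tr t) *
        (classical_channel (?q t) x x' a a' * prepare (trace_normalize {..<dB} (\<omega> t)) y y' b b'))"
    proof (cases "x = x' \<and> a = a'")
      case False
      then have "R (x,y) (x',y') (a,b) (a',b') = 0"
        using resource_classical_XA_offdiag[OF res xy(1,3) ab(1,3,2,4)] xy by simp
      moreover have "classical_channel q x x' a a' = 0" for q
        using False by (auto simp: classical_channel_def)
      ultimately show ?thesis by simp
    next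
      case True
      have "complex_of_real (G t x a) * \<omega> t b b' = complex_of_real (s t * ?tr t) *
          (classical_channel (?q t) x x a a * prepare (trace_normalize {..<dB} (\<omega> t)) 0 0 b b')"
        if "t \<in> T" for t
        using row_normalize_scale[where G = "G t", OF pos(2) G(1)[OF that] G(2)[OF that] xy(1) ab(1)]
          trace_normalize_scale[OF _ \<omega>[OF that], of b b'] ab
        by (simp add: classical_channel_def prepare_def)
      then show ?thesis using True xy ab by (simp add: eq cong: sum.cong)
    qed
  qed
qed

lemma LOSR_free_transformationD:
  assumes "LOSR_free_transformation dX tX dY tY dA tA dB tB dX' tX' dY' tY' dA' tA' dB' tB'
      \<Lambda> p mA mB PA PB EA EB"
  shows "finite \<Lambda>" "\<And>l. l \<in> \<Lambda> \<Longrightarrow> 0 \<le> p l"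
    "\<And>l. l \<in> \<Lambda> \<Longrightarrow> is_CPTP {..<dX'} ({..<dX} \<times> {..<mA l}) (PA l)"
    "\<And>l. l \<in> \<Lambda> \<Longrightarrow> is_CPTP {..<dY'} ({..<dY} \<times> {..<mB l}) (PB l)"
    "\<And>l. l \<in> \<Lambda> \<Longrightarrow> is_CPTP ({..<dA} \<times> {..<mA l}) {..<dA'} (EA l)"
    "\<And>l. l \<in> \<Lambda> \<Longrightarrow> is_CPTP ({..<dB} \<times> {..<mB l}) {..<dB'} (EB l)"
    "is_resource dX tX dY tY dA tA dB tB R \<Longrightarrow>
       is_resource dX' tX' dY' tY' dA' tA' dB' tB' (supermap dX dY dA dB \<Lambda> p mA mB PA PB EA EB R)"
  using assms unfolding LOSR_free_transformation_def by auto

lemma LOSR_free_supermap_to_states: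
  assumes tau: "LOSR_free_transformation dX tX dY tY dA tA dB tB 1 TI 1 TI dA' TQ dB' TQ
      \<Lambda> p mA mB PA PB EA EB"
    and res: "is_resource dX tX dY tY dA tA dB tB R" and cl: "classical_XYA dX dY dA dB R"
  shows "LOSR_free 1 TI 1 TI dA' TQ dB' TQ (supermap dX dY dA dB \<Lambda> p mA mB PA PB EA EB R)"
proof -
  note \<tau> = LOSR_free_transformationD[OF tau]
  define T where "T = \<Lambda> \<times> {..<dX} \<times> {..<dY} \<times> {..<dA}"
  define \<omega>A where "\<omega>A = (\<lambda>(l,x,y::nat,a). wiring dA (mA l) (PA l) (EA l) x (ketbra a a) 0 0)"
  define \<omega>B where "\<omega>B = (\<lambda>(l,x,y,a). wiring dB (mB l) (PB l) (EB l) y (\<lambda>b b2. R (x,y) (x,y) (a,b) (a,b2)) 0 0)"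
  have psd: "psd {..<dA'} (\<omega>A t)" "psd {..<dB'} (\<omega>B t)" if tT: "t \<in> T" for t
  proof -
    obtain l x y a where t: "t = (l,x,y,a)" "l \<in> \<Lambda>" "x < dX" "y < dY" "a < dA"
      using tT unfolding T_def by auto
    have "psd {..<dB} (\<lambda>b b2. R (x,y) (x,y) (a,b) (a,b2))"
      using resource_block_psd[OF res t(3,4)] t(5) by (intro psd_slice_fst[rotated]) auto
    then show "psd {..<dA'} (\<omega>A t)" "psd {..<dB'} (\<omega>B t)"
      unfolding \<omega>A_def \<omega>B_def t using \<tau>(3-6)[OF t(2)] t(3-5)
      by (auto intro!: wiring_psd psd_ketbra simp: is_CPTP_def)
  qed
  show ?thesis
  proof (rule LOSR_free_separable_state[OF \<tau>(7)[OF res], where T = T and c = "\<lambda>t. p (fst t)"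
        and \<omega>A = \<omega>A and \<omega>B = \<omega>B])
    show "finite T" unfolding T_def using \<tau>(1) by simp
  next
    fix a a' b b' :: nat
    show "supermap dX dY dA dB \<Lambda> p mA mB PA PB EA EB R (0,0) (0,0) (a,b) (a',b') =
        (\<Sum>t\<in>T. complex_of_real (p (fst t)) * (\<omega>A t a a' * \<omega>B t b b'))"
      unfolding supermap_factorizes[OF cl] T_def sum.cartesian_product' by (simp add: \<omega>A_def \<omega>B_def)
  qed (use \<tau>(2) psd in \<open>auto simp: T_def\<close>)
qed

lemma LOSR_free_supermap_to_assemblages:
  assumes tau: "LOSR_free_transformation dX tX dY tY dA tA dB TC dX' TC 1 TI dA' TC dB' TQ
      \<Lambda> p mA mB PA PB EA EB"
    and res: "is_resource dX tX dY tY dA tA dB TC R" and cl: "classical_XYA dX dY dA dB R"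
  shows "LOSR_free dX' TC 1 TI dA' TC dB' TQ (supermap dX dY dA dB \<Lambda> p mA mB PA PB EA EB R)"
proof -
  note \<tau> = LOSR_free_transformationD[OF tau]
  define T where "T = \<Lambda> \<times> {..<dY} \<times> {..<dB}"
  define F where "F = (\<lambda>(l,y,b) x' a'. complex_of_real (p l) * (\<Sum>x<dX. \<Sum>a<dA.
      R (x,y) (x,y) (a,b) (a,b) * wiring dA (mA l) (PA l) (EA l) x (ketbra a a) x' x' a' a'))"
  define s where "s = (\<lambda>(l,y,b). complex_of_real (p l) * (\<Sum>a<dA. R (0,y) (0,y) (a,b) (a,b)))"
  define \<omega> where "\<omega> = (\<lambda>(l,y,b). wiring dB (mB l) (PB l) (EB l) y (ketbra b b) 0 0)"
  have F_nonneg: "0 \<le> F t x' a'" if "t \<in> T" "x' < dX'" "a' < dA'" for t x' a'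
    using that \<tau>(2,3,5) unfolding T_def F_def
    by (auto intro!: mult_nonneg_nonneg complex_of_real_nonneg wiring_mixture_nonneg[OF res])
  have F_sum: "(\<Sum>a'<dA'. F t x' a') = s t" if tT: "t \<in> T" and x': "x' < dX'" for t x'
  proof -
    obtain l y b where t: "t = (l,y,b)" "l \<in> \<Lambda>" "y < dY" "b < dB" using tT unfolding T_def by auto
    show ?thesis
      unfolding F_def s_def t prod.case sum_distrib_left[symmetric]
      using wiring_mixture_marginal[OF res \<tau>(3)[OF t(2)] \<tau>(5)[OF t(2)] t(3,4) x'] by simp
  qed
  have \<omega>: "psd {..<dB'} (\<omega> t)" if "t \<in> T" for t
    using that \<tau>(4,6) unfolding T_def \<omega>_def is_CPTP_def by (auto intro!: wiring_psd psd_ketbra)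
  have clB: "\<forall>x<dX. \<forall>y<dY. \<forall>a<dA. \<forall>b<dB. \<forall>b2<dB. b \<noteq> b2 \<longrightarrow> R (x,y) (x,y) (a,b) (a,b2) = 0"
    using resource_classical_B[OF res] by blast
  show ?thesis
  proof (rule LOSR_free_local_hidden_state[OF \<tau>(7)[OF res], where T = T and \<omega> = \<omega>
        and G = "\<lambda>t x' a'. Re (F t x' a')" and s = "\<lambda>t. Re (s t)"])
    show "finite T" unfolding T_def using \<tau>(1) by simp
    show "0 \<le> Re (F t x' a')" if "t \<in> T" "x' < dX'" "a' < dA'" for t x' a'
      using F_nonneg[OF that] by (simp add: less_eq_complex_def)
    show "(\<Sum>a'<dA'. Re (F t x' a')) = Re (s t)" if "t \<in> T" "x' < dX'" for t x'
      using F_sum[OF that] by (simp flip: Re_sum)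
    show "supermap dX dY dA dB \<Lambda> p mA mB PA PB EA EB R (x',0) (x',0) (a',b) (a',b') =
        (\<Sum>t\<in>T. complex_of_real (Re (F t x' a')) * \<omega> t b b')"
      if "x' < dX'" "a' < dA'" "b < dB'" "b' < dB'" for x' a' b b'
    proof -
      have "supermap dX dY dA dB \<Lambda> p mA mB PA PB EA EB R (x',0) (x',0) (a',b) (a',b') =
          (\<Sum>t\<in>T. F t x' a' * \<omega> t b b')"
        unfolding supermap_factorizes_classical_B[OF cl clB] T_def sum.cartesian_product'
        by (simp add: F_def \<omega>_def mult.assoc)
      also have "\<dots> = (\<Sum>t\<in>T. complex_of_real (Re (F t x' a')) * \<omega> t b b')"
        using F_nonneg that by (simp add: nonneg_complex_of_Re cong: sum.cong)
      finally show ?thesis .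
    qed
  qed (fact \<omega>)
qed

theorem proposition2:
  fixes dX dY dA dB dX' dY' dA' dB' :: nat
    and tX tY tA tB tX' tY' tA' tB' :: systype
    and \<Lambda> :: "nat set" and p :: "nat \<Rightarrow> real" and mA mB :: "nat \<Rightarrow> nat"
    and PA PB :: "nat \<Rightarrow> (nat, nat \<times> nat) kern"
    and EA EB :: "nat \<Rightarrow> (nat \<times> nat, nat) kern"
    and R :: "(nat \<times> nat, nat \<times> nat) kern"
  assumes types:
    "((tX, tY, tA, tB), (tX', tY', tA', tB')) = ((TC, TC, TC, TC), (TI, TI, TQ, TQ)) \<or>
     ((tX, tY, tA, tB), (tX', tY', tA', tB')) = ((TC, TC, TC, TC), (TC, TI, TC, TQ)) \<or>
     ((tX, tY, tA, tB), (tX', tY', tA', tB')) = ((TC, TI, TC, TQ), (TI, TI, TQ, TQ))"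
    and sys: "valid_sys dX tX" "valid_sys dY tY" "valid_sys dA tA" "valid_sys dB tB"
      "valid_sys dX' tX'" "valid_sys dY' tY'" "valid_sys dA' tA'" "valid_sys dB' tB'"
    and tau: "LOSR_free_transformation dX tX dY tY dA tA dB tB dX' tX' dY' tY' dA' tA' dB' tB'
                \<Lambda> p mA mB PA PB EA EB"
    and res: "is_resource dX tX dY tY dA tA dB tB R"
  shows "LOSR_free dX' tX' dY' tY' dA' tA' dB' tB'
           (supermap dX dY dA dB \<Lambda> p mA mB PA PB EA EB R)"
proof -
  have XA: "tX = TC" "tA = TC" and Y: "tY = TC \<or> dY = 1"
    using types sys(2) by (auto simp: valid_sys_def)
  have classical: "classical_XYA dX dY dA dB R"
    using resource_classical_XYA[OF res[unfolded XA] Y] .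
  from types consider
      (states) "tX' = TI" "tY' = TI" "tA' = TQ" "tB' = TQ"
    | (assemblages) "tB = TC" "tX' = TC" "tY' = TI" "tA' = TC" "tB' = TQ"
    by auto
  then show ?thesis
  proof cases
    case states
    with sys(5,6) have "dX' = 1" "dY' = 1" by (auto simp: valid_sys_def)
    with states show ?thesis
      using LOSR_free_supermap_to_states[OF _ res classical] tau by simp
  next
    case assemblages
    with sys(6) have "dY' = 1" by (auto simp: valid_sys_def)
    with assemblages show ?thesis
      using LOSR_free_supermap_to_assemblages[OF _ _ classical] tau res by simp
  qed
qed

end
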